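(* In the setting below, suppose $I+M(n,m)$ is invertible for all $(n,m)\in\mathbb{Z}^2$. Then $w=c\,(I+M)^{-1}r$ satisfies the lattice potential KdV equation $$(p+q+w-\hat{\tilde w})(p-q+\hat w-\tilde w)=p^2-q^2\quad\text{for all }(n,m).$$
   Context: Setting: $p,q\in\mathbb{C}$; $\tilde f(n,m)=f(n+1,m)$, $\hat f(n,m)=f(n,m+1)$, $\hat{\tilde f}(n,m)=f(n+1,m+1)$. $\Gamma=\mathrm{Diag}(\mathrm{Diag}(k_1,\dots,k_{N_1}),\Gamma_J^{[N_2]}(\kappa_2),\dots,\Gamma_J^{[N_s]}(\kappa_s))$ with $\Gamma^{[N]}_J(\kappa)$ the $N\times N$ matrix with $\kappa$ on the diagonal and $1$ on the subdiagonal; all eigenvalues $\lambda,\mu$ of $\Gamma$ satisfy $\lambda+\mu\ne0$, and $p,q\notin\{\pm\lambda\}$. $c=(c^{(1)},\dots,c^{(s)})$ a constant row vector (block lengths $N_1,\dots,N_s$). With $\rho(k)=\big(\tfrac{p+k}{p-k}\big)^n\big(\tfrac{q+k}{q-k}\big)^m\rho^0$ and $\rho_i=\rho(k_i)$: $r=(\rho_1,\dots,\rho_{N_1},r_J(\kappa_2),\dots,r_J(\kappa_s))^T$, $r_J(\kappa)=(\partial_k^l\rho/l!|_{k=\kappa})_{l=0}^{N_j-1}$; $M=\mathcal{A}FGH$ where $F=\mathrm{Diag}(\rho_1,\dots,\rho_{N_1},F_J(\kappa_2),\dots)$ with $F_J(\kappa)$ lower triangular, $(i,j)$ entry $\partial_k^{i-j}\rho|_{\kappa}/(i-j)!$;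 $H=\mathrm{Diag}(c_1,\dots,c_{N_1},H_J(c^{(2)}),\dots)$ with $H_J(d)$ having $(i,j)$ entry $d_{i+j-1}$ if $i+j-1\le N_j$ else $0$; $G$ symmetric block matrix with $G_{1,1}=(1/(k_i+k_j))$, $G_{1,j}$ with $(l,t)$ entry $-(-1/(k_l+\kappa_j))^t$, $G_{i,j}$ ($1<i\le j$) with $(l,t)$ entry $\binom{l+t-2}{l-1}(-1)^{l+t}/(\kappa_i+\kappa_j)^{l+t-1}$; and $r$ is replaced by $\mathcal{A}r$, where $\mathcal{A}=\mathrm{Diag}(I_{N_1},\mathcal{A}_2,\dots,\mathcal{A}_s)$, each $\mathcal{A}_j$ a constant lower triangular Toeplitz matrix. *)

theory Defs
  imports "HOL-Analysis.Analysis" "Jordan_Normal_Form.Char_Poly"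
begin

(* The block list is  bl = [(k_1,1),...,(k_N1,1),(kappa_2,N_2),...,(kappa_s,N_s)]:
   the diagonal part Diag(k_1..k_N1) is viewed as N1 Jordan blocks of size 1
   (all formulas of the paper specialise correctly). *)

definition blocks :: "complex list \<Rightarrow> (complex \<times> nat) list \<Rightarrow> (complex \<times> nat) list" where
  "blocks ks js = map (\<lambda>k. (k, 1)) ks @ js"

definition dimN :: "complex list \<Rightarrow> (complex \<times> nat) list \<Rightarrow> nat" where
  "dimN ks js = sum_list (map snd (blocks ks js))"

(* bidx sizes i = (b, l): global (0-based) index i lies in block b at (0-based) local position l *)
fun bidx :: "nat list \<Rightarrow> nat \<Rightarrow> nat \<times> nat" where
  "bidx [] i = (0, i)"
| "bidx (s # ss) i = (if i < s then (0, i) else (case bidx ss (i - s) of (b, l) \<Rightarrow> (Suc b, l)))"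

definition blk :: "complex list \<Rightarrow> (complex \<times> nat) list \<Rightarrow> nat \<Rightarrow> nat" where
  "blk ks js i = fst (bidx (map snd (blocks ks js)) i)"

definition pos :: "complex list \<Rightarrow> (complex \<times> nat) list \<Rightarrow> nat \<Rightarrow> nat" where
  "pos ks js i = snd (bidx (map snd (blocks ks js)) i)"

definition eig :: "complex list \<Rightarrow> (complex \<times> nat) list \<Rightarrow> nat \<Rightarrow> complex" where
  "eig ks js b = fst (blocks ks js ! b)"

definition bsize :: "complex list \<Rightarrow> (complex \<times> nat) list \<Rightarrow> nat \<Rightarrow> nat" where
  "bsize ks js b = snd (blocks ks js ! b)"

definition rho :: "complex \<Rightarrow> complex \<Rightarrow> complex \<Rightarrow> int \<Rightarrow> int \<Rightarrow> complex \<Rightarrow> complex" where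
  "rho p q rho0 n m k = ((p + k) / (p - k)) powi n * ((q + k) / (q - k)) powi m * rho0"

definition drho :: "complex \<Rightarrow> complex \<Rightarrow> complex \<Rightarrow> int \<Rightarrow> int \<Rightarrow> nat \<Rightarrow> complex \<Rightarrow> complex" where
  "drho p q rho0 n m l kappa = (deriv ^^ l) (rho p q rho0 n m) kappa / of_nat (fact l)"

definition Gamma_mat :: "complex list \<Rightarrow> (complex \<times> nat) list \<Rightarrow> complex mat" where
  "Gamma_mat ks js = mat (dimN ks js) (dimN ks js) (\<lambda>(i, j).
     if blk ks js i = blk ks js j then
       (if pos ks js i = pos ks js j then eig ks js (blk ks js i)
        else if pos ks js i = Suc (pos ks js j) then 1 else 0)
     else 0)"

definition r_vec :: "complex \<Rightarrow> complex \<Rightarrow> complex \<Rightarrow> complex list \<Rightarrow> (complex \<times> nat) list \<Rightarrow> int \<Rightarrow> int \<Rightarrow> complex vec" where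
  "r_vec p q rho0 ks js n m = vec (dimN ks js) (\<lambda>i. drho p q rho0 n m (pos ks js i) (eig ks js (blk ks js i)))"

definition F_mat :: "complex \<Rightarrow> complex \<Rightarrow> complex \<Rightarrow> complex list \<Rightarrow> (complex \<times> nat) list \<Rightarrow> int \<Rightarrow> int \<Rightarrow> complex mat" where
  "F_mat p q rho0 ks js n m = mat (dimN ks js) (dimN ks js) (\<lambda>(i, j).
     if blk ks js i = blk ks js j \<and> pos ks js j \<le> pos ks js i
     then drho p q rho0 n m (pos ks js i - pos ks js j) (eig ks js (blk ks js i)) else 0)"

definition G_mat :: "complex list \<Rightarrow> (complex \<times> nat) list \<Rightarrow> complex mat" where
  "G_mat ks js = mat (dimN ks js) (dimN ks js) (\<lambda>(i, j).
     let l = pos ks js i; t = pos ks js j;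
         ka = eig ks js (blk ks js i); kb = eig ks js (blk ks js j)
     in of_nat ((l + t) choose l) * (-1) ^ (l + t) / (ka + kb) ^ (l + t + 1))"

definition H_mat :: "complex vec \<Rightarrow> complex list \<Rightarrow> (complex \<times> nat) list \<Rightarrow> complex mat" where
  "H_mat c ks js = mat (dimN ks js) (dimN ks js) (\<lambda>(i, j).
     if blk ks js i = blk ks js j \<and> pos ks js i + pos ks js j < bsize ks js (blk ks js i)
     then c $ ((i - pos ks js i) + (pos ks js i + pos ks js j)) else 0)"

(* A = Diag(I_N1, A_2, ..., A_s); A_j lower triangular Toeplitz with first column (a (j-2) 0, a (j-2) 1, ...) *)
definition A_mat :: "(nat \<Rightarrow> nat \<Rightarrow> complex) \<Rightarrow> complex list \<Rightarrow> (complex \<times> nat) list \<Rightarrow> complex mat" where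
  "A_mat a ks js = mat (dimN ks js) (dimN ks js) (\<lambda>(i, j).
     if blk ks js i = blk ks js j \<and> pos ks js j \<le> pos ks js i
     then (if blk ks js i < length ks then (if i = j then 1 else 0)
           else a (blk ks js i - length ks) (pos ks js i - pos ks js j))
     else 0)"

definition M_mat :: "complex \<Rightarrow> complex \<Rightarrow> complex \<Rightarrow> (nat \<Rightarrow> nat \<Rightarrow> complex) \<Rightarrow> complex vec \<Rightarrow> complex list \<Rightarrow> (complex \<times> nat) list \<Rightarrow> int \<Rightarrow> int \<Rightarrow> complex mat" where
  "M_mat p q rho0 a c ks js n m = A_mat a ks js * F_mat p q rho0 ks js n m * G_mat ks js * H_mat c ks js"

definition mat_inv :: "complex mat \<Rightarrow> complex mat" where
  "mat_inv X = (SOME B. B \<in> carrier_mat (dim_row X) (dim_row X) \<and> B * X = 1\<^sub>m (dim_row X) \<and> X * B = 1\<^sub>m (dim_row X))"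

definition w_fun :: "complex \<Rightarrow> complex \<Rightarrow> complex \<Rightarrow> (nat \<Rightarrow> nat \<Rightarrow> complex) \<Rightarrow> complex vec \<Rightarrow> complex list \<Rightarrow> (complex \<times> nat) list \<Rightarrow> int \<Rightarrow> int \<Rightarrow> complex" where
  "w_fun p q rho0 a c ks js n m =
     c \<bullet> (mat_inv (1\<^sub>m (dimN ks js) + M_mat p q rho0 a c ks js n m) *\<^sub>v (A_mat a ks js *\<^sub>v r_vec p q rho0 ks js n m))"

end

theory Submission imports Defs begin

(* With N = dimN ks js, write Gm for the Jordan matrix Gamma, L(n, m) = A F(n, m) for the dressed
   plane-wave matrix, G for the generalised Cauchy matrix, H for the Hankel matrix built from c,
   and e for the vector with a 1 at the first position of every Jordan block.  Then c = H e and
   A r = L e, so  w = (H e) . (I + L G H)^{-1} L e.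

   (1) An abstract Cauchy-matrix argument (locale cauchy_setting): if H is symmetric with
       H Gm = Gm^T H and G is symmetric with Gm G + G Gm^T = e e^T, then for every L commuting with
       Gm such that H L is symmetric and P(L) = I + L G H is invertible, the scalar
       S(L) = (H e) . P(L)^{-1} L e satisfies a discrete Riccati relation whenever two such matrices
       are linked by  k L1 - Gm L1 = k L0 + Gm L0.  Writing this relation on the four edges of an
       elementary square and eliminating the auxiliary scalars gives lpKdV.

   (2) The data of the theorem satisfy these hypotheses: Gm, A, F are block lower-triangular
       Toeplitz and H is block Hankel, which gives the commutation and symmetry properties; G solves
       the Sylvester equation by Pascal's rule; and the shift relations for F come from
       rho(n + 1) (p - k) = (p + k) rho(n), compared coefficientwise as power series in k. *)

no_notation vec_nth (infixl \<open>$\<close> 90)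

lemma bidx_props:
  "i < sum_list ss \<Longrightarrow> fst (bidx ss i) < length ss \<and> snd (bidx ss i) < ss ! fst (bidx ss i)
     \<and> i = sum_list (take (fst (bidx ss i)) ss) + snd (bidx ss i)"
proof (induction ss arbitrary: i)
  case Nil then show ?case by simp
next
  case (Cons s ss)
  show ?case
  proof (cases "i < s")
    case True then show ?thesis by simp
  next
    case False
    then have "i - s < sum_list ss" using Cons.prems by simp
    from Cons.IH[OF this] False show ?thesis
      by (auto split: prod.splits)
  qed
qed

lemma bidx_inv:
  "b < length ss \<Longrightarrow> l < ss ! b \<Longrightarrow> bidx ss (sum_list (take b ss) + l) = (b, l)"
proof (induction ss arbitrary: b)
  case Nil then show ?case by simp
next
  case (Cons s ss)
  show ?case
  proof (cases b)
    case 0 then show ?thesis using Cons.prems by simp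
  next
    case (Suc b')
    then have "bidx ss (sum_list (take b' ss) + l) = (b', l)" using Cons by simp
    then show ?thesis using Suc by simp
  qed
qed

definition bstart :: "complex list \<Rightarrow> (complex \<times> nat) list \<Rightarrow> nat \<Rightarrow> nat" where
  "bstart ks js b = sum_list (take b (map snd (blocks ks js)))"

definition nblocks :: "complex list \<Rightarrow> (complex \<times> nat) list \<Rightarrow> nat" where
  "nblocks ks js = length (blocks ks js)"

lemma blk_lt: "i < dimN ks js \<Longrightarrow> blk ks js i < nblocks ks js"
  using bidx_props[of i "map snd (blocks ks js)"] by (simp add: dimN_def blk_def nblocks_def)

lemma pos_lt: "i < dimN ks js \<Longrightarrow> pos ks js i < bsize ks js (blk ks js i)"
  using bidx_props[of i "map snd (blocks ks js)"] by (auto simp add: dimN_def blk_def pos_def bsize_def)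

lemma idx_eq: "i < dimN ks js \<Longrightarrow> i = bstart ks js (blk ks js i) + pos ks js i"
  using bidx_props[of i "map snd (blocks ks js)"] by (simp add: dimN_def blk_def pos_def bstart_def)

lemma idx_inv: assumes "b < nblocks ks js" "l < bsize ks js b"
  shows "blk ks js (bstart ks js b + l) = b" "pos ks js (bstart ks js b + l) = l"
  using bidx_inv[of b "map snd (blocks ks js)" l] assms
  by (simp_all add: blk_def pos_def bstart_def nblocks_def bsize_def)

lemma idx_bound: assumes "b < nblocks ks js" "l < bsize ks js b"
  shows "bstart ks js b + l < dimN ks js"
proof -
  let ?ss = "map snd (blocks ks js)"
  have "sum_list (take (Suc b) ?ss) \<le> sum_list ?ss"
    by (metis append_take_drop_id le_add1 sum_list_append)
  moreover have "take (Suc b) ?ss = take b ?ss @ [?ss ! b]"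
    using assms by (simp add: take_Suc_conv_app_nth nblocks_def)
  ultimately show ?thesis using assms
    by (simp add: bstart_def dimN_def bsize_def nblocks_def)
qed

lemma same_idx: assumes "i < dimN ks js" "j < dimN ks js" "blk ks js i = blk ks js j" "pos ks js i = pos ks js j"
  shows "i = j"
  using idx_eq[OF assms(1)] idx_eq[OF assms(2)] assms(3,4) by simp

lemma prev_idx: assumes "i < dimN ks js" "0 < pos ks js i"
  shows "i - 1 < dimN ks js" "blk ks js (i - 1) = blk ks js i" "pos ks js (i - 1) = pos ks js i - 1"
proof -
  have e: "i - 1 = bstart ks js (blk ks js i) + (pos ks js i - 1)"
    using idx_eq[OF assms(1)] assms(2) by simp
  have b: "blk ks js i < nblocks ks js" "pos ks js i - 1 < bsize ks js (blk ks js i)"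
    using blk_lt[OF assms(1)] pos_lt[OF assms(1)] by auto
  show "i - 1 < dimN ks js" "blk ks js (i - 1) = blk ks js i" "pos ks js (i - 1) = pos ks js i - 1"
    unfolding e using idx_inv[OF b] idx_bound[OF b] by auto
qed

lemma pos_gt0: "i < dimN ks js \<Longrightarrow> 0 < pos ks js i \<Longrightarrow> 0 < i"
  using idx_eq[of i ks js] by linarith

lemma next_idx: assumes "i < dimN ks js" "Suc (pos ks js i) < bsize ks js (blk ks js i)"
  shows "Suc i < dimN ks js" "blk ks js (Suc i) = blk ks js i" "pos ks js (Suc i) = Suc (pos ks js i)"
proof -
  have e: "Suc i = bstart ks js (blk ks js i) + Suc (pos ks js i)"
    using idx_eq[OF assms(1)] by simp
  have b: "blk ks js i < nblocks ks js" "Suc (pos ks js i) < bsize ks js (blk ks js i)"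
    using blk_lt[OF assms(1)] assms(2) by auto
  show "Suc i < dimN ks js" "blk ks js (Suc i) = blk ks js i" "pos ks js (Suc i) = Suc (pos ks js i)"
    unfolding e using idx_inv[OF b] idx_bound[OF b] by auto
qed

lemma block_sum: assumes "b < nblocks ks js"
  shows "(\<Sum>j<dimN ks js. if blk ks js j = b then g j else 0) = (\<Sum>t<bsize ks js b. g (bstart ks js b + t))"
proof -
  have "(\<Sum>j<dimN ks js. if blk ks js j = b then g j else 0) = (\<Sum>j\<in>{j. j < dimN ks js \<and> blk ks js j = b}. g j)"
    by (simp add: sum.If_cases Int_def conj_commute)
  also have "\<dots> = (\<Sum>t<bsize ks js b. g (bstart ks js b + t))"
  proof (rule sum.reindex_bij_witness[where j = "\<lambda>j. pos ks js j" and i = "\<lambda>t. bstart ks js b + t"])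
    fix t assume "t \<in> {..<bsize ks js b}"
    then show "pos ks js (bstart ks js b + t) = t"
      "bstart ks js b + t \<in> {j. j < dimN ks js \<and> blk ks js j = b}"
      using idx_inv[OF assms] idx_bound[OF assms] by auto
  next
    fix j assume j: "j \<in> {j. j < dimN ks js \<and> blk ks js j = b}"
    then show "bstart ks js b + pos ks js j = j" "pos ks js j \<in> {..<bsize ks js b}"
      using idx_eq pos_lt by force+
    then show "g (bstart ks js b + pos ks js j) = g j" by simp
  qed
  finally show ?thesis .
qed

lemma start_sum: assumes i: "i < dimN ks js"
  shows "(\<Sum>j<dimN ks js. (if blk ks js j = blk ks js i \<and> pos ks js j = 0 then g j else 0))
       = g (bstart ks js (blk ks js i))"
proof -
  let ?b = "blk ks js i"
  have b: "?b < nblocks ks js" "0 < bsize ks js ?b" using blk_lt[OF i] pos_lt[OF i] by auto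
  have "(\<Sum>j<dimN ks js. (if blk ks js j = ?b \<and> pos ks js j = 0 then g j else 0))
      = (\<Sum>j<dimN ks js. (if j = bstart ks js ?b then g j else 0))"
  proof (rule sum.cong)
    fix j assume "j \<in> {..<dimN ks js}"
    then have j: "j < dimN ks js" by simp
    have "(blk ks js j = ?b \<and> pos ks js j = 0) \<longleftrightarrow> j = bstart ks js ?b"
      using idx_eq[OF j] idx_inv[OF b(1), of 0] b by (auto simp del: add_0_right)
    then show "(if blk ks js j = ?b \<and> pos ks js j = 0 then g j else 0) = (if j = bstart ks js ?b then g j else 0)"
      by simp
  qed simp
  also have "\<dots> = g (bstart ks js ?b)"
    using idx_bound[OF b(1), of 0] b by (simp add: sum.delta')
  finally show ?thesis .
qed

lemma mult_entry: assumes "A \<in> carrier_mat nr n" "B \<in> carrier_mat n nc" "i < nr" "k < nc"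
  shows "(A * B) $$ (i, k) = (\<Sum>j<n. A $$ (i, j) * B $$ (j, k))"
  using assms by (simp add: scalar_prod_def lessThan_atLeast0)

lemma mult_vec_entry: assumes "A \<in> carrier_mat nr n" "v \<in> carrier_vec n" "i < nr"
  shows "(A *\<^sub>v v) $ i = (\<Sum>j<n. A $$ (i, j) * v $ j)"
  using assms by (simp add: scalar_prod_def lessThan_atLeast0)

text \<open>A sum whose summand is supported on at most two indices; this is how products with the
  bidiagonal matrix Gamma evaluate.\<close>

lemma sum_two_points: assumes "(a::nat) < n" "P \<Longrightarrow> b < n \<and> b \<noteq> a"
  shows "(\<Sum>j<n. (if j = a then f j else if P \<and> j = b then g j else 0)) = f a + (if P then g b else 0)"
proof -
  have "(\<Sum>j<n. (if j = a then f j else if P \<and> j = b then g j else 0))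
      = (\<Sum>j<n. (if j = a then f j else 0)) + (\<Sum>j<n. (if P \<and> j = b then g j else 0))"
    unfolding sum.distrib[symmetric] by (rule sum.cong) (use assms in auto)
  also have "\<dots> = f a + (if P then g b else 0)"
    using assms by (simp add: sum.delta')
  finally show ?thesis .
qed

text \<open>Reindexing the sum that appears in a product of a Hankel and a Toeplitz block.\<close>

lemma sum_shift_filter:
  fixes g :: "nat \<Rightarrow> complex"
  shows "(\<Sum>t<B. if a + t < B \<and> c \<le> t then g t else 0) =
         (if a + c < B then (\<Sum>s<B - (a + c). g (c + s)) else 0)"
proof -
  have "(\<Sum>t<B. if a + t < B \<and> c \<le> t then g t else 0) = (\<Sum>t\<in>{c..<B - a}. g t)"
    by (rule sum.mono_neutral_cong_right) auto
  also have "\<dots> = (\<Sum>s<B - a - c. g (c + s))"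
  proof -
    have "{c..<B - a} = (\<lambda>s. c + s) ` {..<B - a - c}"
    proof (auto simp: image_iff)
      fix x assume "c \<le> x" "x < B - a"
      then show "\<exists>xa\<in>{..<B - (a + c)}. x = c + xa" by (intro bexI[of _ "x - c"]) auto
    qed
    then show ?thesis by (simp add: sum.reindex inj_on_def)
  qed
  finally show ?thesis by (auto simp: algebra_simps)
qed

section \<open>Power series of the plane-wave factor\<close>

text \<open>The normalised derivatives drho are the Taylor coefficients of rho at the block eigenvalue.
  Identities between the functions rho(n, m) therefore become identities between power series, and
  comparing coefficients gives the recurrences needed for the Toeplitz matrices F.\<close>

lemma fps_expansion_nth_0:
  fixes f :: "complex \<Rightarrow> complex"
  assumes "f has_fps_expansion F" shows "fps_nth F 0 = f 0"
  using assms by (auto simp: has_fps_expansion_def eval_fps_at_0 dest: eventually_nhds_x_imp_x)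

lemma fps_expansion_unique_ev:
  fixes f g :: "complex \<Rightarrow> complex"
  assumes "f has_fps_expansion F" "g has_fps_expansion G" "eventually (\<lambda>x. f x = g x) (nhds 0)"
  shows "F = G"
proof (rule fps_ext)
  fix d
  have "fps_nth F d = (deriv ^^ d) f 0 / fact d" by (rule fps_nth_fps_expansion[OF assms(1)])
  also have "(deriv ^^ d) f 0 = (deriv ^^ d) g 0" by (rule higher_deriv_cong_ev[OF assms(3) refl])
  also have "\<dots> / fact d = fps_nth G d" by (rule fps_nth_fps_expansion[OF assms(2), symmetric])
  finally show "fps_nth F d = fps_nth G d" .
qed

lemma fps_expansion_power:
  fixes f :: "complex \<Rightarrow> complex"
  assumes "f has_fps_expansion F" shows "(\<lambda>x. f x ^ k) has_fps_expansion F ^ k"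
proof (induction k)
  case 0 then show ?case by simp
next
  case (Suc k)
  have "(\<lambda>x. f x * f x ^ k) has_fps_expansion F * F ^ k"
    by (rule has_fps_expansion_mult[OF assms Suc])
  then show ?case by simp
qed

lemma fps_expansion_power_int:
  fixes f :: "complex \<Rightarrow> complex"
  assumes "f has_fps_expansion F" "f 0 \<noteq> 0" shows "\<exists>H. (\<lambda>x. f x powi n) has_fps_expansion H"
proof (cases "n \<ge> 0")
  case True
  then have "(\<lambda>x. f x powi n) = (\<lambda>x. f x ^ nat n)" by (simp add: power_int_def)
  then show ?thesis using fps_expansion_power[OF assms(1)] by auto
next
  case False
  have inv: "(\<lambda>x. inverse (f x)) has_fps_expansion inverse F"
    by (rule has_fps_expansion_inverse[OF assms(1)]) (use fps_expansion_nth_0[OF assms(1)] assms(2) in simp)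
  have "(\<lambda>x. f x powi n) = (\<lambda>x. inverse (f x) ^ nat (- n))" using False by (simp add: power_int_def)
  then show ?thesis using fps_expansion_power[OF inv] by auto
qed

text \<open>rho, viewed as a function of k + x, is a product of such powers of Moebius factors.\<close>

lemma mobius_fps_expansion:
  fixes c k :: complex
  assumes "c - k \<noteq> 0"
  shows "\<exists>G. (\<lambda>x. (c + (k + x)) / (c - (k + x))) has_fps_expansion G"
proof -
  have n: "(\<lambda>x. (c + k) + x) has_fps_expansion fps_const (c + k) + fps_X"
    by (intro has_fps_expansion_add has_fps_expansion_const has_fps_expansion_fps_X)
  have d: "(\<lambda>x. (c - k) - x) has_fps_expansion fps_const (c - k) - fps_X"
    by (intro has_fps_expansion_diff has_fps_expansion_const has_fps_expansion_fps_X)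
  have "(\<lambda>x. ((c + k) + x) / ((c - k) - x)) has_fps_expansion (fps_const (c + k) + fps_X) / (fps_const (c - k) - fps_X)"
    by (rule has_fps_expansion_divide'[OF n d]) (use assms in simp)
  moreover have "(\<lambda>x. ((c + k) + x) / ((c - k) - x)) = (\<lambda>x. (c + (k + x)) / (c - (k + x)))"
    by (auto simp: algebra_simps)
  ultimately show ?thesis by auto
qed

lemma rho_fps_expansion:
  assumes "k \<noteq> p" "k \<noteq> - p" "k \<noteq> q" "k \<noteq> - q"
  shows "\<exists>F. (\<lambda>x. rho p q rho0 n m (k + x)) has_fps_expansion F"
proof -
  obtain G1 where G1: "(\<lambda>x. (p + (k + x)) / (p - (k + x))) has_fps_expansion G1"
    using mobius_fps_expansion[of p k] assms by auto
  obtain G2 where G2: "(\<lambda>x. (q + (k + x)) / (q - (k + x))) has_fps_expansion G2"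
    using mobius_fps_expansion[of q k] assms by auto
  have nz1: "(p + (k + 0)) / (p - (k + 0)) \<noteq> 0" using assms by (auto simp: add_eq_0_iff)
  have nz2: "(q + (k + 0)) / (q - (k + 0)) \<noteq> 0" using assms by (auto simp: add_eq_0_iff)
  obtain H1 where H1: "(\<lambda>x. ((p + (k + x)) / (p - (k + x))) powi n) has_fps_expansion H1"
    using fps_expansion_power_int[OF G1, of n] nz1 by auto
  obtain H2 where H2: "(\<lambda>x. ((q + (k + x)) / (q - (k + x))) powi m) has_fps_expansion H2"
    using fps_expansion_power_int[OF G2, of m] nz2 by auto
  have "(\<lambda>x. ((p + (k + x)) / (p - (k + x))) powi n * ((q + (k + x)) / (q - (k + x))) powi m * rho0)
      has_fps_expansion H1 * H2 * fps_const rho0"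
    by (intro has_fps_expansion_mult H1 H2 has_fps_expansion_const)
  then show ?thesis unfolding rho_def by auto
qed

lemma drho_fps_nth:
  assumes "(\<lambda>x. rho p q rho0 n m (k + x)) has_fps_expansion F"
  shows "drho p q rho0 n m d k = fps_nth F d"
proof -
  have "drho p q rho0 n m d k = (deriv ^^ d) (rho p q rho0 n m \<circ> (\<lambda>x. k + x)) 0 / fact d"
    unfolding drho_def by (subst higher_deriv_shift_0) simp
  also have "\<dots> = fps_nth F d"
    using fps_nth_fps_expansion[OF assms, of d] by (simp add: o_def)
  finally show ?thesis .
qed

text \<open>rho is symmetric under exchanging the roles of (p, n) and (q, m); this reduces the m-shift
  to the n-shift.\<close>

lemma rho_swap: "rho q p rho0 m n = rho p q rho0 n m"
  by (rule ext) (simp add: rho_def mult_ac)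

lemma drho_swap: "drho q p rho0 m n d k = drho p q rho0 n m d k"
  by (simp add: drho_def rho_swap)

lemma rho_shift:
  assumes "k \<noteq> p" "k \<noteq> - p"
  shows "rho p q rho0 (n + 1) m k * (p - k) = (p + k) * rho p q rho0 n m k"
proof -
  define b where "b = (p + k) / (p - k)"
  have pk: "p - k \<noteq> 0" using assms by simp
  have "b \<noteq> 0" using assms by (auto simp: b_def add_eq_0_iff)
  then have "b powi (n + 1) = b powi n * b" by (simp add: power_int_add_1)
  moreover have "b * (p - k) = p + k" using pk by (simp add: b_def)
  ultimately show ?thesis unfolding rho_def b_def[symmetric]
    by (metis (no_types, lifting) mult.assoc mult.commute)
qed

lemma fps_shift_coeff:
  fixes F1 F0 :: "complex fps" and c1 c2 :: complex
  assumes "F1 * (fps_const c1 - fps_X) = (fps_const c2 + fps_X) * F0"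
  shows "c1 * fps_nth F1 d - (if d = 0 then 0 else fps_nth F1 (d - 1)) =
         c2 * fps_nth F0 d + (if d = 0 then 0 else fps_nth F0 (d - 1))"
proof -
  have "fps_nth (F1 * (fps_const c1 - fps_X)) d = fps_nth ((fps_const c2 + fps_X) * F0) d"
    using assms by simp
  then show ?thesis by (simp add: algebra_simps)
qed

lemma drho_shift_n:
  assumes "k \<noteq> p" "k \<noteq> - p" "k \<noteq> q" "k \<noteq> - q"
  shows "(p - k) * drho p q rho0 (n + 1) m d k - (if d = 0 then 0 else drho p q rho0 (n + 1) m (d - 1) k)
       = (p + k) * drho p q rho0 n m d k + (if d = 0 then 0 else drho p q rho0 n m (d - 1) k)"
proof -
  obtain F1 where F1: "(\<lambda>x. rho p q rho0 (n + 1) m (k + x)) has_fps_expansion F1" using rho_fps_expansion assms by blast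
  obtain F0 where F0: "(\<lambda>x. rho p q rho0 n m (k + x)) has_fps_expansion F0" using rho_fps_expansion assms by blast
  have e1: "(\<lambda>x. rho p q rho0 (n + 1) m (k + x) * ((p - k) - x)) has_fps_expansion F1 * (fps_const (p - k) - fps_X)"
    by (intro has_fps_expansion_mult F1 has_fps_expansion_diff has_fps_expansion_const has_fps_expansion_fps_X)
  have e2: "(\<lambda>x. ((p + k) + x) * rho p q rho0 n m (k + x)) has_fps_expansion (fps_const (p + k) + fps_X) * F0"
    by (intro has_fps_expansion_mult F0 has_fps_expansion_add has_fps_expansion_const has_fps_expansion_fps_X)
  have t: "((\<lambda>x. k + x) \<longlongrightarrow> k) (nhds 0)"
    using tendsto_add[OF tendsto_const[of k] filterlim_ident[of "nhds (0::complex)"]] by simp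
  have ev: "eventually (\<lambda>x. k + x \<noteq> p \<and> k + x \<noteq> - p) (nhds 0)"
    using tendsto_imp_eventually_ne[OF t, of p] tendsto_imp_eventually_ne[OF t, of "- p"] assms
    by (auto intro: eventually_conj)
  have "eventually (\<lambda>x. rho p q rho0 (n + 1) m (k + x) * ((p - k) - x) = ((p + k) + x) * rho p q rho0 n m (k + x)) (nhds 0)"
    using ev
  proof eventually_elim
    case (elim x)
    then show ?case using rho_shift[of "k + x" p q rho0 n m] by (simp add: algebra_simps)
  qed
  from fps_expansion_unique_ev[OF e1 e2 this] have "F1 * (fps_const (p - k) - fps_X) = (fps_const (p + k) + fps_X) * F0" .
  from fps_shift_coeff[OF this, of d] show ?thesis
    unfolding drho_fps_nth[OF F1] drho_fps_nth[OF F0] .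
qed

lemma drho_shift_m:
  assumes "k \<noteq> p" "k \<noteq> - p" "k \<noteq> q" "k \<noteq> - q"
  shows "(q - k) * drho p q rho0 n (m + 1) d k - (if d = 0 then 0 else drho p q rho0 n (m + 1) (d - 1) k)
       = (q + k) * drho p q rho0 n m d k + (if d = 0 then 0 else drho p q rho0 n m (d - 1) k)"
  using drho_shift_n[of k q p rho0 m n d, unfolded drho_swap[of q p]] assms by simp

section \<open>The abstract Cauchy-matrix argument\<close>

lemma mat_inv_props: assumes P: "P \<in> carrier_mat n n" and inv: "invertible_mat P"
  shows "mat_inv P \<in> carrier_mat n n" "mat_inv P * P = 1\<^sub>m n" "P * mat_inv P = 1\<^sub>m n"
proof -
  from inv obtain B where B: "P * B = 1\<^sub>m (dim_row P)" "B * P = 1\<^sub>m (dim_row B)"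
    unfolding invertible_mat_def inverts_mat_def by blast
  have "dim_col B = n" using arg_cong[OF B(1), of dim_col] P by simp
  moreover have "dim_row B = n" using arg_cong[OF B(2), of dim_col] P by simp
  ultimately have ex: "\<exists>B. B \<in> carrier_mat n n \<and> B * P = 1\<^sub>m n \<and> P * B = 1\<^sub>m n"
    using B P by (intro exI[of _ B]) auto
  have "mat_inv P \<in> carrier_mat n n \<and> mat_inv P * P = 1\<^sub>m n \<and> P * mat_inv P = 1\<^sub>m n"
    unfolding mat_inv_def using P someI_ex[OF ex] by simp
  then show "mat_inv P \<in> carrier_mat n n" "mat_inv P * P = 1\<^sub>m n" "P * mat_inv P = 1\<^sub>m n" by auto
qed

lemma smult_mat_vec: assumes "A \<in> carrier_mat n n" "x \<in> carrier_vec n"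
  shows "(c \<cdot>\<^sub>m A) *\<^sub>v x = c \<cdot>\<^sub>v (A *\<^sub>v (x :: complex vec))"
  using assms by (intro eq_vecI) (auto simp: scalar_prod_def sum_distrib_left algebra_simps)

lemma scalar_prod_transpose: assumes "A \<in> carrier_mat n n" "x \<in> carrier_vec n" "y \<in> carrier_vec n"
  shows "x \<bullet> (A *\<^sub>v y) = (A\<^sup>T *\<^sub>v x) \<bullet> (y :: complex vec)"
  using transpose_vec_mult_scalar[OF assms(1) assms(3) assms(2)] by simp

text \<open>Eliminating the four auxiliary scalars X, Y1, Y2, Y3 from four Riccati-type relations around an
  elementary square leaves exactly lpKdV.\<close>

lemma lpkdv_from_relations:
  fixes s s1 s2 s3 X Y1 Y2 Y3 p q :: complex
  assumes D1: "p * s + X - p * s1 + Y1 = s1 * s" and D2: "q * s + X - q * s2 + Y2 = s2 * s"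
    and D3: "p * s2 + Y2 - p * s3 + Y3 = s3 * s2" and D4: "q * s1 + Y1 - q * s3 + Y3 = s3 * s1"
  shows "(p + q + s - s3) * (p - q + s2 - s1) = p\<^sup>2 - q\<^sup>2"
proof -
  have "(p + q + s - s3) * (p - q + s2 - s1) - (p\<^sup>2 - q\<^sup>2) =
    ((p * s2 + Y2 - p * s3 + Y3) - s3 * s2) - ((q * s1 + Y1 - q * s3 + Y3) - s3 * s1)
    - (((q * s + X - q * s2 + Y2) - s2 * s) - ((p * s + X - p * s1 + Y1) - s1 * s))"
    by (simp add: algebra_simps power2_eq_square)
  then show ?thesis using D1 D2 D3 D4 by simp
qed

lemma shift_left_mult:
  fixes A F1 F0 Gm :: "complex mat"
  assumes c: "A \<in> carrier_mat n n" "F1 \<in> carrier_mat n n" "F0 \<in> carrier_mat n n" "Gm \<in> carrier_mat n n"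
    and comm: "Gm * A = A * Gm"
    and sh: "k \<cdot>\<^sub>m F1 - Gm * F1 = k \<cdot>\<^sub>m F0 + Gm * F0"
  shows "k \<cdot>\<^sub>m (A * F1) - Gm * (A * F1) = k \<cdot>\<^sub>m (A * F0) + Gm * (A * F0)"
proof -
  have e1: "Gm * (A * F1) = A * (Gm * F1)" "Gm * (A * F0) = A * (Gm * F0)"
    using c by (simp_all add: assoc_mult_mat[symmetric, of Gm n n A n] comm)
  have "k \<cdot>\<^sub>m (A * F1) - Gm * (A * F1) = A * (k \<cdot>\<^sub>m F1 - Gm * F1)"
    using c by (simp add: e1 mult_minus_distrib_mat[of A n n "k \<cdot>\<^sub>m F1" n "Gm * F1"] mult_smult_distrib[of A n n F1 n])
  also have "\<dots> = A * (k \<cdot>\<^sub>m F0 + Gm * F0)" by (simp add: sh)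
  also have "\<dots> = k \<cdot>\<^sub>m (A * F0) + Gm * (A * F0)"
    using c by (simp add: e1 mult_add_distrib_mat[of A n n "k \<cdot>\<^sub>m F0" n "Gm * F0"] mult_smult_distrib[of A n n F0 n])
  finally show ?thesis .
qed

locale cauchy_setting =
  fixes N :: nat and Gm G H :: "complex mat" and e :: "complex vec"
  assumes Gm_dim[simp]: "Gm \<in> carrier_mat N N" and G_dim[simp]: "G \<in> carrier_mat N N"
    and H_dim[simp]: "H \<in> carrier_mat N N" and e_dim[simp]: "e \<in> carrier_vec N"
    and H_Gamma: "H * Gm = Gm\<^sup>T * H" and H_sym: "H\<^sup>T = H" and G_sym: "G\<^sup>T = G"
    and sylvester: "Gm * G + G * Gm\<^sup>T = mat N N (\<lambda>(i, k). e $ i * e $ k)"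
begin

lemma dims[simp]: "dim_row Gm = N" "dim_col Gm = N" "dim_row G = N" "dim_col G = N" "dim_row H = N" "dim_col H = N"
  "dim_vec e = N"
  using carrier_matD[OF Gm_dim] carrier_matD[OF G_dim] carrier_matD[OF H_dim] carrier_vecD[OF e_dim] by simp_all

lemma mult_vec_carrier[simp]: "A \<in> carrier_mat N N \<Longrightarrow> A *\<^sub>v x \<in> carrier_vec N"
  unfolding carrier_mat_def carrier_vec_def by simp
lemma mult_carrier[simp]: "A \<in> carrier_mat N N \<Longrightarrow> B \<in> carrier_mat N N \<Longrightarrow> A * B \<in> carrier_mat N N"
  unfolding carrier_mat_def by simp
lemma mv_add: "A \<in> carrier_mat N N \<Longrightarrow> x \<in> carrier_vec N \<Longrightarrow> y \<in> carrier_vec N \<Longrightarrow> A *\<^sub>v (x + y) = A *\<^sub>v x + A *\<^sub>v y"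
  by (rule mult_add_distrib_mat_vec)
lemma mv_minus: "A \<in> carrier_mat N N \<Longrightarrow> x \<in> carrier_vec N \<Longrightarrow> y \<in> carrier_vec N \<Longrightarrow> A *\<^sub>v (x - y) = A *\<^sub>v x - A *\<^sub>v (y :: complex vec)"
  by (rule mult_minus_distrib_mat_vec)
lemma mv_smult: "A \<in> carrier_mat N N \<Longrightarrow> x \<in> carrier_vec N \<Longrightarrow> A *\<^sub>v (c \<cdot>\<^sub>v x) = c \<cdot>\<^sub>v (A *\<^sub>v (x :: complex vec))"
  by (rule mult_mat_vec)
lemma mv_madd: "A \<in> carrier_mat N N \<Longrightarrow> B \<in> carrier_mat N N \<Longrightarrow> x \<in> carrier_vec N \<Longrightarrow> (A + B) *\<^sub>v x = A *\<^sub>v x + B *\<^sub>v x"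
  by (rule add_mult_distrib_mat_vec)
lemma mv_mminus: "A \<in> carrier_mat N N \<Longrightarrow> B \<in> carrier_mat N N \<Longrightarrow> x \<in> carrier_vec N \<Longrightarrow> (A - B) *\<^sub>v x = A *\<^sub>v x - B *\<^sub>v (x :: complex vec)"
  by (rule minus_mult_distrib_mat_vec)
lemma mv_msmult: "A \<in> carrier_mat N N \<Longrightarrow> x \<in> carrier_vec N \<Longrightarrow> (c \<cdot>\<^sub>m A) *\<^sub>v x = c \<cdot>\<^sub>v (A *\<^sub>v (x :: complex vec))"
  by (rule smult_mat_vec)
lemma mv_mult: "A \<in> carrier_mat N N \<Longrightarrow> B \<in> carrier_mat N N \<Longrightarrow> x \<in> carrier_vec N \<Longrightarrow> (A * B) *\<^sub>v x = A *\<^sub>v (B *\<^sub>v x)"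
  by (rule assoc_mult_mat_vec)

lemma mv_zero: "A \<in> carrier_mat N N \<Longrightarrow> A *\<^sub>v 0\<^sub>v N = (0\<^sub>v N :: complex vec)"
  by (intro eq_vecI) (auto simp: scalar_prod_def)

lemmas lin = mv_add mv_minus mv_smult mv_madd mv_mminus mv_msmult mv_mult

lemma H_Gamma_v: assumes x: "x \<in> carrier_vec N" shows "H *\<^sub>v (Gm *\<^sub>v x) = Gm\<^sup>T *\<^sub>v (H *\<^sub>v x)"
proof -
  have "H *\<^sub>v (Gm *\<^sub>v x) = (H * Gm) *\<^sub>v x" by (rule mv_mult[symmetric]) (simp_all add: x)
  also have "\<dots> = (Gm\<^sup>T * H) *\<^sub>v x" by (simp add: H_Gamma)
  also have "\<dots> = Gm\<^sup>T *\<^sub>v (H *\<^sub>v x)" by (rule mv_mult) (simp_all add: x)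
  finally show ?thesis .
qed

lemma sylvester_v: assumes x: "x \<in> carrier_vec N"
  shows "Gm *\<^sub>v (G *\<^sub>v x) + G *\<^sub>v (Gm\<^sup>T *\<^sub>v x) = (e \<bullet> x) \<cdot>\<^sub>v e"
proof -
  have "Gm *\<^sub>v (G *\<^sub>v x) + G *\<^sub>v (Gm\<^sup>T *\<^sub>v x) = (Gm * G + G * Gm\<^sup>T) *\<^sub>v x"
    using x by (simp add: lin)
  also have "\<dots> = mat N N (\<lambda>(i, k). e $ i * e $ k) *\<^sub>v x" by (simp add: sylvester)
  also have "\<dots> = (e \<bullet> x) \<cdot>\<^sub>v e"
    using x by (intro eq_vecI) (auto simp: scalar_prod_def sum_distrib_left algebra_simps mult_mat_vec_def)
  finally show ?thesis .
qed

definition cvec :: "complex vec" where "cvec = H *\<^sub>v e"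
definition sys :: "complex mat \<Rightarrow> complex mat" where "sys L = 1\<^sub>m N + L * G * H"
definition sys_inv :: "complex mat \<Rightarrow> complex mat" where "sys_inv L = mat_inv (sys L)"
definition sol :: "complex mat \<Rightarrow> complex vec" where "sol L = sys_inv L *\<^sub>v (L *\<^sub>v e)"
definition pot :: "complex mat \<Rightarrow> complex" where "pot L = cvec \<bullet> sol L"
definition potX :: "complex mat \<Rightarrow> complex" where "potX L = cvec \<bullet> (Gm *\<^sub>v sol L)"
definition potY :: "complex mat \<Rightarrow> complex" where "potY L = cvec \<bullet> (sys_inv L *\<^sub>v (Gm *\<^sub>v (L *\<^sub>v e)))"

lemma cvec_carrier[simp]: "cvec \<in> carrier_vec N" by (simp add: cvec_def)

lemma e_scalar_H: "x \<in> carrier_vec N \<Longrightarrow> e \<bullet> (H *\<^sub>v x) = cvec \<bullet> x"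
  using scalar_prod_transpose[OF H_dim e_dim, of x] H_sym by (simp add: cvec_def)

context fixes L assumes Lc[simp]: "L \<in> carrier_mat N N" and Linv: "invertible_mat (sys L)"
begin

lemma sys_carrier[simp]: "sys L \<in> carrier_mat N N" by (simp add: sys_def)
lemma sys_inv_props[simp]: "sys_inv L \<in> carrier_mat N N" "sys_inv L * sys L = 1\<^sub>m N" "sys L * sys_inv L = 1\<^sub>m N"
  using mat_inv_props[OF sys_carrier Linv] by (simp_all add: sys_inv_def)
lemma sol_carrier[simp]: "sol L \<in> carrier_vec N" by (simp add: sol_def)

lemma sys_mult_vec: "x \<in> carrier_vec N \<Longrightarrow> sys L *\<^sub>v x = x + L *\<^sub>v (G *\<^sub>v (H *\<^sub>v x))"
  by (simp add: sys_def lin)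

lemma sys_sol: "sol L + L *\<^sub>v (G *\<^sub>v (H *\<^sub>v sol L)) = L *\<^sub>v e"
proof -
  have "sys L *\<^sub>v sol L = (sys L * sys_inv L) *\<^sub>v (L *\<^sub>v e)" unfolding sol_def by (rule mv_mult[symmetric]) simp_all
  then have "sys L *\<^sub>v sol L = L *\<^sub>v e" by simp
  then show ?thesis using sys_mult_vec[OF sol_carrier] by simp
qed

lemma sys_inv_cancel: "x \<in> carrier_vec N \<Longrightarrow> sys_inv L *\<^sub>v (sys L *\<^sub>v x) = x"
proof -
  assume x: "x \<in> carrier_vec N"
  have "sys_inv L *\<^sub>v (sys L *\<^sub>v x) = (sys_inv L * sys L) *\<^sub>v x" using x by (rule mv_mult[symmetric, rotated 2]) simp_all
  then show ?thesis using x by simp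
qed

lemma sys_transpose_mult_vec: "x \<in> carrier_vec N \<Longrightarrow> (sys L)\<^sup>T *\<^sub>v x = x + H *\<^sub>v (G *\<^sub>v (L\<^sup>T *\<^sub>v x))"
proof -
  assume x: "x \<in> carrier_vec N"
  have "(sys L)\<^sup>T = 1\<^sub>m N + H * (G * L\<^sup>T)"
    unfolding sys_def using transpose_add[of "1\<^sub>m N" N N "L * G * H"] transpose_mult[of "L * G" N N H N]
      transpose_mult[OF Lc G_dim] H_sym G_sym by simp
  then show ?thesis using x by (simp add: lin)
qed

lemma sys_transpose_dual: "(sys L)\<^sup>T *\<^sub>v ((sys_inv L)\<^sup>T *\<^sub>v cvec) = cvec"
proof -
  have "(sys L)\<^sup>T *\<^sub>v ((sys_inv L)\<^sup>T *\<^sub>v cvec) = ((sys L)\<^sup>T * (sys_inv L)\<^sup>T) *\<^sub>v cvec"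
    by (simp add: lin)
  also have "(sys L)\<^sup>T * (sys_inv L)\<^sup>T = (sys_inv L * sys L)\<^sup>T"
    by (rule transpose_mult[symmetric, of _ N N _ N]) simp_all
  finally show ?thesis by simp
qed

text \<open>Invertibility of P(L) in the form used below: the map d \<mapsto> d + H L G d is injective
  (if it kills d, then P(L) kills L G d, so L G d = 0 and hence d = 0).\<close>

lemma injective_HLG:
  assumes a: "a \<in> carrier_vec N" and b: "b \<in> carrier_vec N"
    and eq: "a + H *\<^sub>v (L *\<^sub>v (G *\<^sub>v a)) = b + H *\<^sub>v (L *\<^sub>v (G *\<^sub>v b))"
  shows "a = b"
proof -
  have [simp]: "dim_vec a = N" "dim_vec b = N" using a b by auto
  define d where "d = a - b"
  have [simp]: "d \<in> carrier_vec N" "dim_vec d = N" using a b by (simp_all add: d_def)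
  have Kd: "d + H *\<^sub>v (L *\<^sub>v (G *\<^sub>v d)) = 0\<^sub>v N"
  proof (rule eq_vecI)
    fix i assume "i < dim_vec (0\<^sub>v N :: complex vec)" then have i: "i < N" by simp
    have "(a + H *\<^sub>v (L *\<^sub>v (G *\<^sub>v a))) $ i = (b + H *\<^sub>v (L *\<^sub>v (G *\<^sub>v b))) $ i" using eq by simp
    then show "(d + H *\<^sub>v (L *\<^sub>v (G *\<^sub>v d))) $ i = 0\<^sub>v N $ i"
      using i a b unfolding d_def by (simp add: lin algebra_simps)
  qed simp
  define y where "y = L *\<^sub>v (G *\<^sub>v d)"
  have [simp]: "y \<in> carrier_vec N" by (simp add: y_def)
  have "sys L *\<^sub>v y = y + L *\<^sub>v (G *\<^sub>v (H *\<^sub>v y))" by (rule sys_mult_vec) simp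
  also have "\<dots> = L *\<^sub>v (G *\<^sub>v (d + H *\<^sub>v (L *\<^sub>v (G *\<^sub>v d))))"
    unfolding y_def by (simp add: lin)
  finally have "sys L *\<^sub>v y = 0\<^sub>v N" unfolding Kd by (simp add: mv_zero)
  then have y0: "y = 0\<^sub>v N" using sys_inv_cancel[of y] by (simp add: mv_zero)
  show "a = b"
  proof (rule eq_vecI)
    fix i assume "i < dim_vec b" then have i: "i < N" by simp
    have "(d + H *\<^sub>v y) $ i = 0" using Kd i by (simp add: y_def)
    then have "d $ i = 0" using i y0 by (simp add: mv_zero)
    then show "a $ i = b $ i" using i by (simp add: d_def)
  qed simp
qed

end

lemma sylvester_shift:
  assumes u: "u \<in> carrier_vec N"
  shows "G *\<^sub>v (H *\<^sub>v (k \<cdot>\<^sub>v u + Gm *\<^sub>v u))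
       = k \<cdot>\<^sub>v (G *\<^sub>v (H *\<^sub>v u)) - Gm *\<^sub>v (G *\<^sub>v (H *\<^sub>v u)) + (cvec \<bullet> u) \<cdot>\<^sub>v e"
proof -
  define a where "a = H *\<^sub>v u"
  have [simp]: "a \<in> carrier_vec N" by (simp add: a_def)
  have Hw: "H *\<^sub>v (k \<cdot>\<^sub>v u + Gm *\<^sub>v u) = k \<cdot>\<^sub>v a + Gm\<^sup>T *\<^sub>v a"
    unfolding a_def using u by (simp add: lin H_Gamma_v)
  have syl: "Gm *\<^sub>v (G *\<^sub>v a) + G *\<^sub>v (Gm\<^sup>T *\<^sub>v a) = (cvec \<bullet> u) \<cdot>\<^sub>v e"
    using sylvester_v[of a] e_scalar_H[OF u] by (simp add: a_def)
  show ?thesis unfolding Hw a_def[symmetric]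
  proof (rule eq_vecI)
    fix i assume "i < dim_vec (k \<cdot>\<^sub>v (G *\<^sub>v a) - Gm *\<^sub>v (G *\<^sub>v a) + (cvec \<bullet> u) \<cdot>\<^sub>v e)"
    then have i: "i < N" by simp
    have "(Gm *\<^sub>v (G *\<^sub>v a) + G *\<^sub>v (Gm\<^sup>T *\<^sub>v a)) $ i = ((cvec \<bullet> u) \<cdot>\<^sub>v e) $ i" using syl by simp
    then have "(Gm *\<^sub>v (G *\<^sub>v a)) $ i + (G *\<^sub>v (Gm\<^sup>T *\<^sub>v a)) $ i = (cvec \<bullet> u) * e $ i" using i by simp
    then show "(G *\<^sub>v (k \<cdot>\<^sub>v a + Gm\<^sup>T *\<^sub>v a)) $ i
        = (k \<cdot>\<^sub>v (G *\<^sub>v a) - Gm *\<^sub>v (G *\<^sub>v a) + (cvec \<bullet> u) \<cdot>\<^sub>v e) $ i"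
      using i by (simp add: lin algebra_simps)
  qed simp
qed

lemma shift_system:
  assumes L0c[simp]: "L0 \<in> carrier_mat N N" and L1c[simp]: "L1 \<in> carrier_mat N N"
    and inv0: "invertible_mat (sys L0)" and inv1: "invertible_mat (sys L1)"
    and comm1: "Gm * L1 = L1 * Gm"
    and shift: "k \<cdot>\<^sub>m L1 - Gm * L1 = k \<cdot>\<^sub>m L0 + Gm * L0"
  shows "sys L1 *\<^sub>v (k \<cdot>\<^sub>v sol L0 + Gm *\<^sub>v sol L0)
       = k \<cdot>\<^sub>v (L1 *\<^sub>v e) - Gm *\<^sub>v (L1 *\<^sub>v e) + pot L0 \<cdot>\<^sub>v (L1 *\<^sub>v e)"
proof -
  have [simp]: "sol L0 \<in> carrier_vec N" "dim_row L0 = N" "dim_row L1 = N" "dim_col L0 = N" "dim_col L1 = N"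
    using sol_carrier[OF L0c inv0] carrier_matD[OF L0c] carrier_matD[OF L1c]
    by simp_all
  define u0 where "u0 = sol L0"
  define g where "g = G *\<^sub>v (H *\<^sub>v u0)"
  define s0 where "s0 = pot L0"
  define w where "w = k \<cdot>\<^sub>v u0 + Gm *\<^sub>v u0"
  have [simp]: "u0 \<in> carrier_vec N" "g \<in> carrier_vec N" "w \<in> carrier_vec N"
    "dim_vec u0 = N" "dim_vec g = N" "dim_vec w = N"
    by (simp_all add: u0_def g_def w_def carrier_vecD)
  have shift_v: "k \<cdot>\<^sub>v (L1 *\<^sub>v x) - Gm *\<^sub>v (L1 *\<^sub>v x) = k \<cdot>\<^sub>v (L0 *\<^sub>v x) + Gm *\<^sub>v (L0 *\<^sub>v x)"
    if x: "x \<in> carrier_vec N" for x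
  proof -
    have "(k \<cdot>\<^sub>m L1 - Gm * L1) *\<^sub>v x = (k \<cdot>\<^sub>m L0 + Gm * L0) *\<^sub>v x" by (simp add: shift)
    then show ?thesis using x by (simp add: lin)
  qed
  have comm_g: "L1 *\<^sub>v (Gm *\<^sub>v g) = Gm *\<^sub>v (L1 *\<^sub>v g)"
  proof -
    have "(Gm * L1) *\<^sub>v g = (L1 * Gm) *\<^sub>v g" by (simp add: comm1)
    then show ?thesis by (simp add: lin)
  qed
  have GHw: "G *\<^sub>v (H *\<^sub>v w) = k \<cdot>\<^sub>v g - Gm *\<^sub>v g + s0 \<cdot>\<^sub>v e"
    unfolding w_def g_def s0_def pot_def u0_def by (rule sylvester_shift) simp
  have sys0: "u0 + L0 *\<^sub>v g = L0 *\<^sub>v e"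
    using sys_sol[OF L0c inv0] by (simp add: u0_def g_def)
  show ?thesis unfolding u0_def[symmetric] s0_def[symmetric] w_def[symmetric]
  proof (rule eq_vecI)
    fix i assume "i < dim_vec (k \<cdot>\<^sub>v (L1 *\<^sub>v e) - Gm *\<^sub>v (L1 *\<^sub>v e) + s0 \<cdot>\<^sub>v (L1 *\<^sub>v e))"
    then have i: "i < N" by simp
    have a: "(k \<cdot>\<^sub>v (L1 *\<^sub>v g) - Gm *\<^sub>v (L1 *\<^sub>v g)) $ i = (k \<cdot>\<^sub>v (L0 *\<^sub>v g) + Gm *\<^sub>v (L0 *\<^sub>v g)) $ i"
      using shift_v[of g] by simp
    have b: "(k \<cdot>\<^sub>v (L1 *\<^sub>v e) - Gm *\<^sub>v (L1 *\<^sub>v e)) $ i = (k \<cdot>\<^sub>v (L0 *\<^sub>v e) + Gm *\<^sub>v (L0 *\<^sub>v e)) $ i"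
      using shift_v[of e] by simp
    have c: "(Gm *\<^sub>v (u0 + L0 *\<^sub>v g)) $ i = (Gm *\<^sub>v (L0 *\<^sub>v e)) $ i" using sys0 by simp
    have "u0 $ i + row L0 i \<bullet> g = row L0 i \<bullet> e" using arg_cong[OF sys0, of "\<lambda>x. x $ i"] i by simp
    then have d: "k * u0 $ i + k * (row L0 i \<bullet> g) = k * (row L0 i \<bullet> e)" by (metis distrib_left)
    show "(sys L1 *\<^sub>v w) $ i = (k \<cdot>\<^sub>v (L1 *\<^sub>v e) - Gm *\<^sub>v (L1 *\<^sub>v e) + s0 \<cdot>\<^sub>v (L1 *\<^sub>v e)) $ i"
      unfolding sys_mult_vec[OF L1c inv1 \<open>w \<in> carrier_vec N\<close>] GHw
      using a b c d i by (simp add: lin comm_g w_def algebra_simps)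
  qed (simp add: sys_def)
qed

lemma shift_solution:
  assumes L0c[simp]: "L0 \<in> carrier_mat N N" and L1c[simp]: "L1 \<in> carrier_mat N N"
    and inv0: "invertible_mat (sys L0)" and inv1: "invertible_mat (sys L1)"
    and comm1: "Gm * L1 = L1 * Gm"
    and shift: "k \<cdot>\<^sub>m L1 - Gm * L1 = k \<cdot>\<^sub>m L0 + Gm * L0"
  shows "k \<cdot>\<^sub>v sol L0 + Gm *\<^sub>v sol L0
       = k \<cdot>\<^sub>v sol L1 - sys_inv L1 *\<^sub>v (Gm *\<^sub>v (L1 *\<^sub>v e)) + pot L0 \<cdot>\<^sub>v sol L1"
proof -
  have [simp]: "sys_inv L1 \<in> carrier_mat N N" "sol L0 \<in> carrier_vec N"
    using sys_inv_props[OF L1c inv1] sol_carrier[OF L0c inv0] by simp_all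
  let ?w = "k \<cdot>\<^sub>v sol L0 + Gm *\<^sub>v sol L0"
  have "?w = sys_inv L1 *\<^sub>v (sys L1 *\<^sub>v ?w)" using sys_inv_cancel[OF L1c inv1, of ?w] by simp
  also have "\<dots> = k \<cdot>\<^sub>v sol L1 - sys_inv L1 *\<^sub>v (Gm *\<^sub>v (L1 *\<^sub>v e)) + pot L0 \<cdot>\<^sub>v sol L1"
    unfolding shift_system[OF assms] unfolding sol_def by (simp add: lin)
  finally show ?thesis .
qed

lemma riccati:
  assumes L0c[simp]: "L0 \<in> carrier_mat N N" and L1c[simp]: "L1 \<in> carrier_mat N N"
    and inv0: "invertible_mat (sys L0)" and inv1: "invertible_mat (sys L1)"
    and comm1: "Gm * L1 = L1 * Gm"
    and shift: "k \<cdot>\<^sub>m L1 - Gm * L1 = k \<cdot>\<^sub>m L0 + Gm * L0"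
  shows "k * pot L0 + potX L0 - k * pot L1 + potY L1 = pot L1 * pot L0"
proof -
  have [simp]: "sys_inv L1 \<in> carrier_mat N N" "sol L0 \<in> carrier_vec N" "sol L1 \<in> carrier_vec N"
    using sys_inv_props[OF L1c inv1] sol_carrier[OF L0c inv0] sol_carrier[OF L1c inv1] by simp_all
  have "cvec \<bullet> (k \<cdot>\<^sub>v sol L0 + Gm *\<^sub>v sol L0) = k * pot L0 + potX L0"
    unfolding potX_def pot_def
    by (simp add: scalar_prod_add_distrib[of _ N] scalar_prod_smult_distrib[of _ N])
  moreover have "cvec \<bullet> (k \<cdot>\<^sub>v sol L1 - sys_inv L1 *\<^sub>v (Gm *\<^sub>v (L1 *\<^sub>v e)) + pot L0 \<cdot>\<^sub>v sol L1)
      = k * pot L1 - potY L1 + pot L0 * pot L1"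
    unfolding potY_def pot_def
    by (simp add: scalar_prod_add_distrib[of _ N] scalar_prod_minus_distrib[of _ N] scalar_prod_smult_distrib[of _ N])
  ultimately show ?thesis
    using shift_solution[OF assms] by (simp add: algebra_simps)
qed

text \<open>Because G is symmetric, the quadratic forms of G Gm^T and Gm G coincide.\<close>

lemma G_Gamma_quadratic: assumes b: "b \<in> carrier_vec N"
  shows "b \<bullet> (G *\<^sub>v (Gm\<^sup>T *\<^sub>v b)) = b \<bullet> (Gm *\<^sub>v (G *\<^sub>v b))"
proof -
  have "b \<bullet> (G *\<^sub>v (Gm\<^sup>T *\<^sub>v b)) = (G *\<^sub>v b) \<bullet> (Gm\<^sup>T *\<^sub>v b)"
    using scalar_prod_transpose[OF G_dim b, of "Gm\<^sup>T *\<^sub>v b"] b G_sym by simp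
  also have "\<dots> = (Gm\<^sup>T *\<^sub>v b) \<bullet> (G *\<^sub>v b)" by (rule comm_scalar_prod[of _ N]) (simp_all add: b)
  also have "\<dots> = b \<bullet> (Gm *\<^sub>v (G *\<^sub>v b))" using scalar_prod_transpose[OF Gm_dim b, of "G *\<^sub>v b"] b by simp
  finally show ?thesis .
qed

text \<open>If H L is symmetric, then H u(L) is L^T applied to the dual solution P(L)^{-T} cvec: both
  solve x + H L G x = H L e, whose solution is unique.\<close>

lemma H_sol_dual:
  assumes Lc[simp]: "L \<in> carrier_mat N N" and inv: "invertible_mat (sys L)"
    and HL_sym: "(H * L)\<^sup>T = H * L"
  shows "H *\<^sub>v sol L = L\<^sup>T *\<^sub>v ((sys_inv L)\<^sup>T *\<^sub>v cvec)"
proof -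
  have [simp]: "sys_inv L \<in> carrier_mat N N" "sol L \<in> carrier_vec N"
    using sys_inv_props[OF Lc inv] sol_carrier[OF Lc inv] by simp_all
  define v where "v = (sys_inv L)\<^sup>T *\<^sub>v cvec"
  have [simp]: "v \<in> carrier_vec N" by (simp add: v_def)
  have HL_v: "H *\<^sub>v (L *\<^sub>v x) = L\<^sup>T *\<^sub>v (H *\<^sub>v x)" if x: "x \<in> carrier_vec N" for x
  proof -
    have "H *\<^sub>v (L *\<^sub>v x) = (H * L)\<^sup>T *\<^sub>v x" using x by (simp add: lin HL_sym)
    also have "\<dots> = (L\<^sup>T * H) *\<^sub>v x" using transpose_mult[OF H_dim Lc] H_sym by simp
    finally show ?thesis using x by (simp add: lin)
  qed
  have Le: "L *\<^sub>v e = sol L + L *\<^sub>v (G *\<^sub>v (H *\<^sub>v sol L))" using sys_sol[OF Lc inv] by simp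
  have primal: "H *\<^sub>v sol L + H *\<^sub>v (L *\<^sub>v (G *\<^sub>v (H *\<^sub>v sol L))) = H *\<^sub>v (L *\<^sub>v e)"
    unfolding Le by (simp add: lin)
  have "L\<^sup>T *\<^sub>v v + H *\<^sub>v (L *\<^sub>v (G *\<^sub>v (L\<^sup>T *\<^sub>v v))) = L\<^sup>T *\<^sub>v ((sys L)\<^sup>T *\<^sub>v v)"
    by (simp add: HL_v sys_transpose_mult_vec[OF Lc inv] lin)
  also have "\<dots> = H *\<^sub>v (L *\<^sub>v e)"
    unfolding v_def sys_transpose_dual[OF Lc inv] unfolding cvec_def by (simp add: HL_v)
  finally have dual: "L\<^sup>T *\<^sub>v v + H *\<^sub>v (L *\<^sub>v (G *\<^sub>v (L\<^sup>T *\<^sub>v v))) = H *\<^sub>v (L *\<^sub>v e)" .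
  show ?thesis unfolding v_def[symmetric]
    by (rule injective_HLG[OF Lc inv]) (use primal dual in simp_all)
qed

lemma potX_eq_potY:
  assumes Lc[simp]: "L \<in> carrier_mat N N" and inv: "invertible_mat (sys L)"
    and comm: "Gm * L = L * Gm" and HL_sym: "(H * L)\<^sup>T = H * L"
  shows "potX L = potY L"
proof -
  have [simp]: "sys L \<in> carrier_mat N N" "sys_inv L \<in> carrier_mat N N" "sol L \<in> carrier_vec N"
    using sys_carrier[OF Lc inv] sys_inv_props[OF Lc inv] sol_carrier[OF Lc inv] by simp_all
  define u where "u = sol L"
  define v where "v = (sys_inv L)\<^sup>T *\<^sub>v cvec"
  define a where "a = H *\<^sub>v u"
  have [simp]: "u \<in> carrier_vec N" "v \<in> carrier_vec N" "a \<in> carrier_vec N"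
    by (simp_all add: u_def v_def a_def)
  have a_dual: "a = L\<^sup>T *\<^sub>v v" unfolding a_def u_def v_def by (rule H_sol_dual[OF Lc inv HL_sym])
  have Le: "L *\<^sub>v e = u + L *\<^sub>v (G *\<^sub>v a)" using sys_sol[OF Lc inv] by (simp add: u_def a_def)
  have comm_v: "Gm *\<^sub>v (L *\<^sub>v x) = L *\<^sub>v (Gm *\<^sub>v x)" if x: "x \<in> carrier_vec N" for x
  proof -
    have "(Gm * L) *\<^sub>v x = (L * Gm) *\<^sub>v x" by (simp add: comm)
    then show ?thesis using x by (simp add: lin)
  qed
  have "potX L = ((sys L)\<^sup>T *\<^sub>v v) \<bullet> (Gm *\<^sub>v u)"
    unfolding potX_def u_def v_def sys_transpose_dual[OF Lc inv] ..
  also have "\<dots> = v \<bullet> (sys L *\<^sub>v (Gm *\<^sub>v u))"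
    by (rule scalar_prod_transpose[symmetric, of _ N]) simp_all
  also have "\<dots> = v \<bullet> (Gm *\<^sub>v u) + v \<bullet> (L *\<^sub>v (G *\<^sub>v (Gm\<^sup>T *\<^sub>v a)))"
    using sys_mult_vec[OF Lc inv, of "Gm *\<^sub>v u"] H_Gamma_v[of u]
    by (simp add: a_def scalar_prod_add_distrib[of _ N])
  finally have X: "potX L = v \<bullet> (Gm *\<^sub>v u) + a \<bullet> (G *\<^sub>v (Gm\<^sup>T *\<^sub>v a))"
    unfolding a_dual by (simp add: scalar_prod_transpose[OF Lc])
  have "potY L = v \<bullet> (Gm *\<^sub>v (L *\<^sub>v e))"
    unfolding potY_def v_def by (rule scalar_prod_transpose[of _ N]) simp_all
  also have "\<dots> = v \<bullet> (Gm *\<^sub>v u) + v \<bullet> (L *\<^sub>v (Gm *\<^sub>v (G *\<^sub>v a)))"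
    unfolding Le by (simp add: lin comm_v scalar_prod_add_distrib[of _ N])
  finally have Y: "potY L = v \<bullet> (Gm *\<^sub>v u) + a \<bullet> (Gm *\<^sub>v (G *\<^sub>v a))"
    unfolding a_dual by (simp add: scalar_prod_transpose[OF Lc])
  show ?thesis unfolding X Y G_Gamma_quadratic[OF \<open>a \<in> carrier_vec N\<close>] ..
qed

lemma lpkdv_abstract:
  fixes L :: "int \<Rightarrow> int \<Rightarrow> complex mat" and p q :: complex
  assumes Lc: "\<And>n m. L n m \<in> carrier_mat N N"
    and inv: "\<And>n m. invertible_mat (sys (L n m))"
    and comm: "\<And>n m. Gm * L n m = L n m * Gm"
    and HL_sym: "\<And>n m. (H * L n m)\<^sup>T = H * L n m"
    and shift_p: "\<And>n m. p \<cdot>\<^sub>m L (n + 1) m - Gm * L (n + 1) m = p \<cdot>\<^sub>m L n m + Gm * L n m"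
    and shift_q: "\<And>n m. q \<cdot>\<^sub>m L n (m + 1) - Gm * L n (m + 1) = q \<cdot>\<^sub>m L n m + Gm * L n m"
  shows "(p + q + pot (L n m) - pot (L (n + 1) (m + 1))) * (p - q + pot (L n (m + 1)) - pot (L (n + 1) m))
       = p\<^sup>2 - q\<^sup>2"
proof -
  have XY: "potX (L a b) = potY (L a b)" for a b by (rule potX_eq_potY[OF Lc inv comm HL_sym])
  note ric_p = riccati[OF Lc Lc inv inv comm shift_p] and ric_q = riccati[OF Lc Lc inv inv comm shift_q]
  show ?thesis
    by (rule lpkdv_from_relations[OF ric_p[of n m] ric_q[of n m]
          ric_p[of n "m + 1", unfolded XY] ric_q[of "n + 1" m, unfolded XY]])
qed

end

section \<open>The Jordan matrix Gamma\<close>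

context fixes ks :: "complex list" and js :: "(complex \<times> nat) list"
begin

abbreviation "N \<equiv> dimN ks js"
abbreviation "bk \<equiv> blk ks js"
abbreviation "ps \<equiv> pos ks js"
abbreviation "bs \<equiv> bsize ks js"
abbreviation "ev \<equiv> eig ks js"
abbreviation "Gm \<equiv> Gamma_mat ks js"

lemma Gamma_carrier[simp]: "Gm \<in> carrier_mat N N"
  by (simp add: Gamma_mat_def)

lemma Gamma_dims[simp]: "dim_row Gm = N" "dim_col Gm = N"
  by (simp_all add: Gamma_mat_def)

lemma Gamma_entry: assumes "i < N" "j < N"
  shows "Gm $$ (i, j) = (if j = i then ev (bk i) else if 0 < ps i \<and> j = i - 1 then 1 else 0)"
proof -
  have A: "ps i = Suc (ps j) \<and> bk i = bk j \<longleftrightarrow> 0 < ps i \<and> j = i - 1"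
  proof
    assume h: "ps i = Suc (ps j) \<and> bk i = bk j"
    then have "0 < ps i" by simp
    note pr = prev_idx[OF assms(1) this]
    have "i - 1 = j"
      by (rule same_idx) (use assms h pr in auto)
    with h show "0 < ps i \<and> j = i - 1" by auto
  next
    assume "0 < ps i \<and> j = i - 1"
    then show "ps i = Suc (ps j) \<and> bk i = bk j" using prev_idx[OF assms(1)] by auto
  qed
  have B: "bk i = bk j \<and> ps i = ps j \<longleftrightarrow> i = j"
    using same_idx[OF assms] by auto
  have E: "Gm $$ (i, j) = (if bk i = bk j then (if ps i = ps j then ev (bk i) else if ps i = Suc (ps j) then 1 else 0) else 0)"
    using assms by (simp add: Gamma_mat_def)
  show ?thesis
  proof (cases "j = i")
    case True then show ?thesis using E by simp
  next
    case False
    then have "\<not> (bk i = bk j \<and> ps i = ps j)" using B by blast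
    then have "Gm $$ (i, j) = (if ps i = Suc (ps j) \<and> bk i = bk j then 1 else 0)"
      unfolding E by auto
    then show ?thesis using A False by simp
  qed
qed

lemma Gamma_entry': assumes "j < N" "k < N"
  shows "Gm $$ (j, k) = (if j = k then ev (bk k) else if Suc (ps k) < bs (bk k) \<and> j = Suc k then 1 else 0)"
proof -
  have "(0 < ps j \<and> k = j - 1) \<longleftrightarrow> (Suc (ps k) < bs (bk k) \<and> j = Suc k)"
  proof
    assume h: "0 < ps j \<and> k = j - 1"
    then show "Suc (ps k) < bs (bk k) \<and> j = Suc k"
      using prev_idx[OF assms(1)] pos_lt[OF assms(1)] idx_eq[OF assms(1)] by (cases j) auto
  next
    assume h: "Suc (ps k) < bs (bk k) \<and> j = Suc k"
    then show "0 < ps j \<and> k = j - 1" using next_idx[OF assms(2)] by auto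
  qed
  then show ?thesis using Gamma_entry[OF assms] by auto
qed

lemma Gamma_mult: assumes "X \<in> carrier_mat N nc" "i < N" "k < nc"
  shows "(Gm * X) $$ (i, k) = ev (bk i) * X $$ (i, k) + (if 0 < ps i then X $$ (i - 1, k) else 0)"
proof -
  have "(Gm * X) $$ (i, k) = (\<Sum>j<N. Gm $$ (i, j) * X $$ (j, k))"
    by (rule mult_entry[OF Gamma_carrier assms])
  also have "\<dots> = (\<Sum>j<N. (if j = i then ev (bk i) * X $$ (j, k) else if 0 < ps i \<and> j = i - 1 then X $$ (j, k) else 0))"
    by (rule sum.cong) (auto simp: Gamma_entry assms)
  also have "\<dots> = ev (bk i) * X $$ (i, k) + (if 0 < ps i then X $$ (i - 1, k) else 0)"
    by (rule sum_two_points) (use assms prev_idx[of i ks js] pos_gt0[of i ks js] in auto)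
  finally show ?thesis .
qed

lemma Gamma_mult_vec: assumes "v \<in> carrier_vec N" "i < N"
  shows "(Gm *\<^sub>v v) $ i = ev (bk i) * v $ i + (if 0 < ps i then v $ (i - 1) else 0)"
proof -
  have "(Gm *\<^sub>v v) $ i = (\<Sum>j<N. Gm $$ (i, j) * v $ j)"
    by (rule mult_vec_entry[OF Gamma_carrier assms])
  also have "\<dots> = (\<Sum>j<N. (if j = i then ev (bk i) * v $ j else if 0 < ps i \<and> j = i - 1 then v $ j else 0))"
    by (rule sum.cong) (auto simp: Gamma_entry assms)
  also have "\<dots> = ev (bk i) * v $ i + (if 0 < ps i then v $ (i - 1) else 0)"
    by (rule sum_two_points) (use assms prev_idx[of i ks js] pos_gt0[of i ks js] in auto)
  finally show ?thesis .
qed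

lemma mult_Gamma: assumes "X \<in> carrier_mat nr N" "i < nr" "k < N"
  shows "(X * Gm) $$ (i, k) = X $$ (i, k) * ev (bk k) + (if Suc (ps k) < bs (bk k) then X $$ (i, Suc k) else 0)"
proof -
  have "(X * Gm) $$ (i, k) = (\<Sum>j<N. X $$ (i, j) * Gm $$ (j, k))"
    by (rule mult_entry[OF assms(1) Gamma_carrier assms(2,3)])
  also have "\<dots> = (\<Sum>j<N. (if j = k then X $$ (i, j) * ev (bk k) else if Suc (ps k) < bs (bk k) \<and> j = Suc k then X $$ (i, j) else 0))"
    by (rule sum.cong) (auto simp: Gamma_entry' assms)
  also have "\<dots> = X $$ (i, k) * ev (bk k) + (if Suc (ps k) < bs (bk k) then X $$ (i, Suc k) else 0)"
    by (rule sum_two_points) (use assms next_idx in auto)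
  finally show ?thesis .
qed

lemma mult_GammaT: assumes "X \<in> carrier_mat nr N" "i < nr" "k < N"
  shows "(X * Gm\<^sup>T) $$ (i, k) = X $$ (i, k) * ev (bk k) + (if 0 < ps k then X $$ (i, k - 1) else 0)"
proof -
  have "(X * Gm\<^sup>T) $$ (i, k) = (\<Sum>j<N. X $$ (i, j) * Gm $$ (k, j))"
    using mult_entry[OF assms(1) _ assms(2,3), of "Gm\<^sup>T"] by (auto simp: assms intro!: sum.cong)
  also have "\<dots> = (\<Sum>j<N. (if j = k then X $$ (i, j) * ev (bk k) else if 0 < ps k \<and> j = k - 1 then X $$ (i, j) else 0))"
    by (rule sum.cong) (auto simp: Gamma_entry assms)
  also have "\<dots> = X $$ (i, k) * ev (bk k) + (if 0 < ps k then X $$ (i, k - 1) else 0)"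
    by (rule sum_two_points) (use assms prev_idx[of k ks js] pos_gt0[of k ks js] in auto)
  finally show ?thesis .
qed

lemma GammaT_mult: assumes "X \<in> carrier_mat N nc" "i < N" "k < nc"
  shows "(Gm\<^sup>T * X) $$ (i, k) = ev (bk i) * X $$ (i, k) + (if Suc (ps i) < bs (bk i) then X $$ (Suc i, k) else 0)"
proof -
  have "(Gm\<^sup>T * X) $$ (i, k) = (\<Sum>j<N. Gm $$ (j, i) * X $$ (j, k))"
    using mult_entry[OF _ assms(1) assms(2,3), of "Gm\<^sup>T"] by (auto simp: assms intro!: sum.cong)
  also have "\<dots> = (\<Sum>j<N. (if j = i then ev (bk i) * X $$ (j, k) else if Suc (ps i) < bs (bk i) \<and> j = Suc i then X $$ (j, k) else 0))"
    by (rule sum.cong) (auto simp: Gamma_entry' assms)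
  also have "\<dots> = ev (bk i) * X $$ (i, k) + (if Suc (ps i) < bs (bk i) then X $$ (Suc i, k) else 0)"
    by (rule sum_two_points) (use assms next_idx in auto)
  finally show ?thesis .
qed

text \<open>Each block eigenvalue is an eigenvalue of Gamma (eigenvector: the last unit vector of the
  block); this converts the spectral hypotheses of the theorem into statements about blocks.\<close>

lemma eig_eigenvalue: assumes i: "i < N" shows "eigenvalue Gm (ev (bk i))"
proof -
  define b where "b = bk i"
  have b: "b < nblocks ks js" "bs b - 1 < bs b" using blk_lt[OF i] pos_lt[OF i] by (auto simp: b_def)
  define j where "j = bstart ks js b + (bs b - 1)"
  have j: "j < N" "bk j = b" "ps j = bs b - 1"
    using idx_bound[OF b] idx_inv[OF b] by (simp_all add: j_def)
  define v where "v = (unit_vec N j :: complex vec)"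
  have "Gm *\<^sub>v v = ev b \<cdot>\<^sub>v v"
  proof (rule eq_vecI)
    fix t assume "t < dim_vec (ev b \<cdot>\<^sub>v v)"
    then have t: "t < N" by (simp add: v_def)
    have "(if 0 < ps t then v $ (t - 1) else 0) = 0"
    proof (cases "0 < ps t \<and> t - 1 = j")
      case True
      then have "bk t = b" "ps t = bs b" using prev_idx[OF t] j b(2) by auto
      then show ?thesis using pos_lt[OF t] by simp
    next
      case False
      then show ?thesis using prev_idx[OF t] j(1) by (auto simp: v_def)
    qed
    moreover have vt: "v $ t = (if t = j then 1 else 0)" using t j by (simp add: v_def)
    moreover have "v \<in> carrier_vec N" by (simp add: v_def)
    ultimately show "(Gm *\<^sub>v v) $ t = (ev b \<cdot>\<^sub>v v) $ t"
      using Gamma_mult_vec[of v t] t j by (auto simp: v_def[symmetric])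
  qed (simp add: v_def)
  moreover have "v \<in> carrier_vec N" "v \<noteq> 0\<^sub>v N"
    using j by (auto simp: v_def dest!: arg_cong[where f = "\<lambda>x. x $ j"])
  ultimately show ?thesis unfolding eigenvalue_def eigenvector_def b_def by auto
qed
section \<open>Block Toeplitz and block Hankel matrices\<close>

text \<open>All matrices of the
  theorem except G are of one of these two kinds.\<close>
definition toep :: "(nat \<Rightarrow> nat \<Rightarrow> complex) \<Rightarrow> complex mat" where
  "toep f = mat N N (\<lambda>(i, k). if bk i = bk k \<and> ps k \<le> ps i then f (bk i) (ps i - ps k) else 0)"

definition hank :: "(nat \<Rightarrow> nat \<Rightarrow> complex) \<Rightarrow> complex mat" where
  "hank h = mat N N (\<lambda>(i, k). if bk i = bk k \<and> ps i + ps k < bs (bk i) then h (bk i) (ps i + ps k) else 0)"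

lemma toep_carrier[simp]: "toep f \<in> carrier_mat N N" by (simp add: toep_def)
lemma hank_carrier[simp]: "hank h \<in> carrier_mat N N" by (simp add: hank_def)
lemma toep_dims[simp]: "dim_row (toep f) = N" "dim_col (toep f) = N" by (simp_all add: toep_def)
lemma hank_dims[simp]: "dim_row (hank h) = N" "dim_col (hank h) = N" by (simp_all add: hank_def)

lemma toep_entry: "i < N \<Longrightarrow> k < N \<Longrightarrow> toep f $$ (i, k) =
   (if bk i = bk k \<and> ps k \<le> ps i then f (bk i) (ps i - ps k) else 0)"
  by (simp add: toep_def)

lemma hank_entry: "i < N \<Longrightarrow> k < N \<Longrightarrow> hank h $$ (i, k) =
   (if bk i = bk k \<and> ps i + ps k < bs (bk i) then h (bk i) (ps i + ps k) else 0)"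
  by (simp add: hank_def)

lemma toep_comm: "Gm * toep f = toep f * Gm"
proof (rule eq_matI)
  fix i k assume ik: "i < dim_row (toep f * Gm)" "k < dim_col (toep f * Gm)"
  then have i: "i < N" and k: "k < N" by auto
  have L: "(Gm * toep f) $$ (i, k) = ev (bk i) * toep f $$ (i, k) + (if 0 < ps i then toep f $$ (i - 1, k) else 0)"
    by (rule Gamma_mult[OF toep_carrier i k])
  have R: "(toep f * Gm) $$ (i, k) = toep f $$ (i, k) * ev (bk k) + (if Suc (ps k) < bs (bk k) then toep f $$ (i, Suc k) else 0)"
    by (rule mult_Gamma[OF toep_carrier i k])
  have X: "(if 0 < ps i then toep f $$ (i - 1, k) else 0) = (if Suc (ps k) < bs (bk k) then toep f $$ (i, Suc k) else 0)"
  proof (cases "bk i = bk k \<and> ps k < ps i")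
    case True
    then have "Suc (ps k) < bs (bk k)" using pos_lt[OF i] by auto
    with True show ?thesis using prev_idx[OF i] next_idx[OF k] i k
      by (auto simp: toep_entry)
  next
    case False
    have a: "0 < ps i \<Longrightarrow> toep f $$ (i - 1, k) = 0"
      using prev_idx[OF i] False k by (auto simp: toep_entry)
    have b: "Suc (ps k) < bs (bk k) \<Longrightarrow> toep f $$ (i, Suc k) = 0"
      using next_idx[OF k] False i by (auto simp: toep_entry)
    show ?thesis using a b by simp
  qed
  have Y: "ev (bk i) * toep f $$ (i, k) = toep f $$ (i, k) * ev (bk k)"
    using i k by (auto simp: toep_entry)
  show "(Gm * toep f) $$ (i, k) = (toep f * Gm) $$ (i, k)"
    unfolding L R X Y ..
qed (auto)

lemma hank_Gamma: "hank h * Gm = Gm\<^sup>T * hank h"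
proof (rule eq_matI)
  fix i k assume ik: "i < dim_row (Gm\<^sup>T * hank h)" "k < dim_col (Gm\<^sup>T * hank h)"
  then have i: "i < N" and k: "k < N" by auto
  have L: "(hank h * Gm) $$ (i, k) = hank h $$ (i, k) * ev (bk k) + (if Suc (ps k) < bs (bk k) then hank h $$ (i, Suc k) else 0)"
    by (rule mult_Gamma[OF hank_carrier i k])
  have R: "(Gm\<^sup>T * hank h) $$ (i, k) = ev (bk i) * hank h $$ (i, k) + (if Suc (ps i) < bs (bk i) then hank h $$ (Suc i, k) else 0)"
    by (rule GammaT_mult[OF hank_carrier i k])
  have X: "(if Suc (ps k) < bs (bk k) then hank h $$ (i, Suc k) else 0) = (if Suc (ps i) < bs (bk i) then hank h $$ (Suc i, k) else 0)"
  proof (cases "bk i = bk k \<and> Suc (ps i + ps k) < bs (bk i)")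
    case True
    then have "Suc (ps k) < bs (bk k)" "Suc (ps i) < bs (bk i)" by auto
    with True show ?thesis using next_idx[OF i] next_idx[OF k] i k
      by (auto simp: hank_entry)
  next
    case False
    have a: "Suc (ps k) < bs (bk k) \<Longrightarrow> hank h $$ (i, Suc k) = 0"
      using next_idx[OF k] False i by (auto simp: hank_entry)
    have b: "Suc (ps i) < bs (bk i) \<Longrightarrow> hank h $$ (Suc i, k) = 0"
      using next_idx[OF i] False k by (auto simp: hank_entry)
    show ?thesis using a b by simp
  qed
  have Y: "hank h $$ (i, k) * ev (bk k) = ev (bk i) * hank h $$ (i, k)"
    using i k by (auto simp: hank_entry)
  show "(hank h * Gm) $$ (i, k) = (Gm\<^sup>T * hank h) $$ (i, k)"
    unfolding L R X Y ..
qed (auto)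

lemma hank_sym: "(hank h)\<^sup>T = hank h"
  by (rule eq_matI) (auto simp: hank_entry add.commute)

lemma hank_toep: "hank h * toep f = hank (\<lambda>b d. \<Sum>s<bs b - d. h b (d + s) * f b s)"
proof (rule eq_matI)
  fix i k assume ik: "i < dim_row (hank (\<lambda>b d. \<Sum>s<bs b - d. h b (d + s) * f b s))"
     "k < dim_col (hank (\<lambda>b d. \<Sum>s<bs b - d. h b (d + s) * f b s))"
  then have i: "i < N" and k: "k < N" by simp_all
  have "(hank h * toep f) $$ (i, k) = (\<Sum>j<N. hank h $$ (i, j) * toep f $$ (j, k))"
    by (rule mult_entry[OF hank_carrier toep_carrier i k])
  also have "\<dots> = (if bk i = bk k then (\<Sum>j<N. if bk j = bk i then
        (if ps i + ps j < bs (bk i) \<and> ps k \<le> ps j then h (bk i) (ps i + ps j) * f (bk i) (ps j - ps k) else 0) else 0) else 0)"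
  proof (cases "bk i = bk k")
    case True then show ?thesis using i k by (auto intro!: sum.cong simp: hank_entry toep_entry)
  next
    case False then show ?thesis using i k by (auto intro!: sum.neutral simp: hank_entry toep_entry)
  qed
  also have "\<dots> = (if bk i = bk k then (\<Sum>t<bs (bk i). 
        (if ps i + t < bs (bk i) \<and> ps k \<le> t then h (bk i) (ps i + t) * f (bk i) (t - ps k) else 0)) else 0)"
  proof (cases "bk i = bk k")
    case True
    let ?g = "\<lambda>j. if ps i + ps j < bs (bk i) \<and> ps k \<le> ps j then h (bk i) (ps i + ps j) * f (bk i) (ps j - ps k) else 0"
    have "(\<Sum>j<N. if bk j = bk i then ?g j else 0) = (\<Sum>t<bs (bk i). ?g (bstart ks js (bk i) + t))"
      by (rule block_sum[OF blk_lt[OF i]])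
    also have "\<dots> = (\<Sum>t<bs (bk i). 
        (if ps i + t < bs (bk i) \<and> ps k \<le> t then h (bk i) (ps i + t) * f (bk i) (t - ps k) else 0))"
      by (rule sum.cong) (simp_all add: idx_inv[OF blk_lt[OF i]])
    finally show ?thesis using True by simp
  qed simp
  also have "\<dots> = (if bk i = bk k then (if ps i + ps k < bs (bk i) then
        (\<Sum>s<bs (bk i) - (ps i + ps k). h (bk i) (ps i + (ps k + s)) * f (bk i) s) else 0) else 0)"
    by (simp add: sum_shift_filter)
  also have "\<dots> = hank (\<lambda>b d. \<Sum>s<bs b - d. h b (d + s) * f b s) $$ (i, k)"
    using i k by (simp add: hank_entry add.assoc)
  finally show "(hank h * toep f) $$ (i, k) = hank (\<lambda>b d. \<Sum>s<bs b - d. h b (d + s) * f b s) $$ (i, k)" .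
qed (auto)

text \<open>The vector e with a 1 at the first position of every block; applying a Toeplitz or a Hankel
  matrix to it reads off the generating coefficients, which is how r and c are expressed.\<close>

definition evec :: "complex vec" where
  "evec = vec N (\<lambda>i. if ps i = 0 then 1 else 0)"

lemma evec_carrier[simp]: "evec \<in> carrier_vec N" by (simp add: evec_def)
lemma evec_dim[simp]: "dim_vec evec = N" by (simp add: evec_def)

lemma toep_evec: "toep f *\<^sub>v evec = vec N (\<lambda>i. f (bk i) (ps i))"
proof (rule eq_vecI)
  fix i assume "i < dim_vec (vec N (\<lambda>i. f (bk i) (ps i)))"
  then have i: "i < N" by simp
  have b: "bk i < nblocks ks js" "0 < bs (bk i)" using blk_lt[OF i] pos_lt[OF i] by auto
  have "(toep f *\<^sub>v evec) $ i = (\<Sum>j<N. toep f $$ (i, j) * evec $ j)"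
    by (rule mult_vec_entry[OF toep_carrier evec_carrier i])
  also have "\<dots> = (\<Sum>j<N. (if bk j = bk i \<and> ps j = 0 then f (bk i) (ps i - ps j) else 0))"
    by (rule sum.cong) (auto simp: toep_entry evec_def i)
  also have "\<dots> = f (bk i) (ps i - ps (bstart ks js (bk i)))"
    by (rule start_sum[OF i])
  also have "\<dots> = f (bk i) (ps i)"
    using idx_inv(2)[OF b(1), of 0] b by simp
  finally show "(toep f *\<^sub>v evec) $ i = vec N (\<lambda>i. f (bk i) (ps i)) $ i" using i by simp
qed simp

lemma hank_evec:
  shows "hank h *\<^sub>v evec = vec N (\<lambda>i. h (bk i) (ps i))"
proof (rule eq_vecI)
  fix i assume "i < dim_vec (vec N (\<lambda>i. h (bk i) (ps i)))"
  then have i: "i < N" by simp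
  have b: "bk i < nblocks ks js" "0 < bs (bk i)" using blk_lt[OF i] pos_lt[OF i] by auto
  have "(hank h *\<^sub>v evec) $ i = (\<Sum>j<N. hank h $$ (i, j) * evec $ j)"
    by (rule mult_vec_entry[OF hank_carrier evec_carrier i])
  also have "\<dots> = (\<Sum>j<N. (if bk j = bk i \<and> ps j = 0 then h (bk i) (ps i + ps j) else 0))"
    by (rule sum.cong) (use pos_lt[OF i] in \<open>auto simp: hank_entry evec_def i\<close>)
  also have "\<dots> = h (bk i) (ps i + ps (bstart ks js (bk i)))"
    by (rule start_sum[OF i])
  also have "\<dots> = h (bk i) (ps i)"
    using idx_inv(2)[OF b(1), of 0] b by simp
  finally show "(hank h *\<^sub>v evec) $ i = vec N (\<lambda>i. h (bk i) (ps i)) $ i" using i by simp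
qed simp

lemma toep_prev: assumes "i < N" "k < N"
  shows "(if 0 < ps i then toep f $$ (i - 1, k) else 0) =
    (if bk i = bk k \<and> ps k \<le> ps i then (if ps i - ps k = 0 then 0 else f (bk i) (ps i - ps k - 1)) else 0)"
  using assms prev_idx[OF assms(1)] by (auto simp: toep_entry)

lemma toep_shift:
  assumes sh: "\<And>i d. i < N \<Longrightarrow> (c - ev (bk i)) * f1 (bk i) d - (if d = 0 then 0 else f1 (bk i) (d - 1))
       = (c + ev (bk i)) * f0 (bk i) d + (if d = 0 then 0 else f0 (bk i) (d - 1))"
  shows "c \<cdot>\<^sub>m toep f1 - Gm * toep f1 = c \<cdot>\<^sub>m toep f0 + Gm * toep f0"
proof (rule eq_matI)
  fix i k assume "i < dim_row (c \<cdot>\<^sub>m toep f0 + Gm * toep f0)" "k < dim_col (c \<cdot>\<^sub>m toep f0 + Gm * toep f0)"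
  then have i: "i < N" and k: "k < N" by simp_all
  have L: "(c \<cdot>\<^sub>m toep f1 - Gm * toep f1) $$ (i, k) = c * toep f1 $$ (i, k) - (ev (bk i) * toep f1 $$ (i, k) + (if 0 < ps i then toep f1 $$ (i - 1, k) else 0))"
    using Gamma_mult[OF toep_carrier i k, of f1] i k by simp
  have R: "(c \<cdot>\<^sub>m toep f0 + Gm * toep f0) $$ (i, k) = c * toep f0 $$ (i, k) + (ev (bk i) * toep f0 $$ (i, k) + (if 0 < ps i then toep f0 $$ (i - 1, k) else 0))"
    using Gamma_mult[OF toep_carrier i k, of f0] i k by simp
  show "(c \<cdot>\<^sub>m toep f1 - Gm * toep f1) $$ (i, k) = (c \<cdot>\<^sub>m toep f0 + Gm * toep f0) $$ (i, k)"
    unfolding L R toep_prev[OF i k]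
    using sh[OF i, of "ps i - ps k"] i k by (auto simp: toep_entry algebra_simps)
qed simp_all

section \<open>The generalised Cauchy matrix G\<close>

definition gfun :: "complex \<Rightarrow> complex \<Rightarrow> nat \<Rightarrow> nat \<Rightarrow> complex" where
  "gfun a b l t = of_nat ((l + t) choose l) * (-1) ^ (l + t) / (a + b) ^ (l + t + 1)"

lemma choose_sym: "(l + t) choose t = (l + t) choose l"
  using binomial_symmetric[of t "l + t"] by simp

lemma choose_Suc_split:
  assumes "l + t = Suc n"
  shows "Suc n choose l = (if 0 < l then n choose (l - 1) else 0) + (if 0 < t then n choose l else 0)"
proof (cases l)
  case 0 then show ?thesis using assms by simp
next
  case (Suc l')
  then show ?thesis using assms by (cases t) auto
qed

text \<open>The recurrence that makes G solve the Sylvester equation.\<close>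

lemma gfun_identity: assumes ab: "a + b \<noteq> 0"
  shows "(a + b) * gfun a b l t + (if 0 < l then gfun a b (l - 1) t else 0) + (if 0 < t then gfun a b l (t - 1) else 0)
        = (if l = 0 \<and> t = 0 then 1 else 0)"
proof (cases "l + t")
  case 0 then show ?thesis using ab by (simp add: gfun_def)
next
  case (Suc n)
  define D where "D k = (-1) ^ k / (a + b) ^ (k + 1)" for k
  have step: "(a + b) * D (Suc n) = - D n" using ab by (simp add: D_def)
  have g: "gfun a b l t = of_nat (Suc n choose l) * D (Suc n)"
    "(if 0 < l then gfun a b (l - 1) t else 0) = (if 0 < l then of_nat (n choose (l - 1)) * D n else 0)"
    "(if 0 < t then gfun a b l (t - 1) else 0) = (if 0 < t then of_nat (n choose l) * D n else 0)"
    using Suc by (simp_all add: gfun_def D_def)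
  have e: "(a + b) * gfun a b l t = - (of_nat (Suc n choose l) * D n)"
    unfolding g(1) mult.left_commute[of "a + b"] step by simp
  have c: "of_nat (Suc n choose l)
      = (if 0 < l then of_nat (n choose (l - 1)) else 0) + (if 0 < t then of_nat (n choose l) else (0::complex))"
    using choose_Suc_split[OF Suc] by simp
  show ?thesis unfolding e c g(2,3) using Suc by (simp add: algebra_simps)
qed

lemma G_entry: "i < N \<Longrightarrow> k < N \<Longrightarrow> G_mat ks js $$ (i, k) = gfun (ev (bk i)) (ev (bk k)) (ps i) (ps k)"
  by (simp add: G_mat_def gfun_def Let_def)

lemma G_carrier[simp]: "G_mat ks js \<in> carrier_mat N N" by (simp add: G_mat_def)
lemma G_dims[simp]: "dim_row (G_mat ks js) = N" "dim_col (G_mat ks js) = N" by (simp_all add: G_mat_def)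

lemma G_sym: "(G_mat ks js)\<^sup>T = G_mat ks js"
proof (rule eq_matI)
  fix i k assume "i < dim_row (G_mat ks js)" "k < dim_col (G_mat ks js)"
  then show "(G_mat ks js)\<^sup>T $$ (i, k) = G_mat ks js $$ (i, k)"
    using choose_sym[of "ps i" "ps k"] by (simp add: G_entry gfun_def add.commute)
qed auto

lemma G_sylvester: assumes ne: "\<And>i k. i < N \<Longrightarrow> k < N \<Longrightarrow> ev (bk i) + ev (bk k) \<noteq> 0"
  shows "Gm * G_mat ks js + G_mat ks js * Gm\<^sup>T = mat N N (\<lambda>(i, k). evec $ i * evec $ k)"
proof (rule eq_matI)
  fix i k assume "i < dim_row (mat N N (\<lambda>(i, k). evec $ i * evec $ k))" "k < dim_col (mat N N (\<lambda>(i, k). evec $ i * evec $ k))"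
  then have i: "i < N" and k: "k < N" by simp_all
  let ?a = "ev (bk i)" and ?b = "ev (bk k)"
  have L: "(Gm * G_mat ks js) $$ (i, k) = ?a * gfun ?a ?b (ps i) (ps k) + (if 0 < ps i then gfun ?a ?b (ps i - 1) (ps k) else 0)"
    using Gamma_mult[OF G_carrier i k] prev_idx[OF i] i k by (auto simp: G_entry)
  have R: "(G_mat ks js * Gm\<^sup>T) $$ (i, k) = gfun ?a ?b (ps i) (ps k) * ?b + (if 0 < ps k then gfun ?a ?b (ps i) (ps k - 1) else 0)"
    using mult_GammaT[OF G_carrier i k] prev_idx[OF k] i k by (auto simp: G_entry)
  have "(Gm * G_mat ks js + G_mat ks js * Gm\<^sup>T) $$ (i, k) = (Gm * G_mat ks js) $$ (i, k) + (G_mat ks js * Gm\<^sup>T) $$ (i, k)"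
    using i k by simp
  also have "\<dots> = (?a + ?b) * gfun ?a ?b (ps i) (ps k) + (if 0 < ps i then gfun ?a ?b (ps i - 1) (ps k) else 0)
       + (if 0 < ps k then gfun ?a ?b (ps i) (ps k - 1) else 0)"
    unfolding L R by (simp add: algebra_simps)
  also have "\<dots> = mat N N (\<lambda>(i, k). evec $ i * evec $ k) $$ (i, k)"
    using gfun_identity[OF ne[OF i k]] i k by (simp add: evec_def)
  finally show "(Gm * G_mat ks js + G_mat ks js * Gm\<^sup>T) $$ (i, k) = mat N N (\<lambda>(i, k). evec $ i * evec $ k) $$ (i, k)" .
qed auto

text \<open>The first N1 blocks have size 1, so on them A is the identity.\<close>

lemma bsize_ks: "b < length ks \<Longrightarrow> bs b = 1"
  by (simp add: bsize_def blocks_def nth_append)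

lemma A_toep: "A_mat a ks js = toep (\<lambda>b d. if b < length ks then (if d = 0 then 1 else 0) else a (b - length ks) d)"
proof (rule eq_matI)
  fix i k assume "i < dim_row (toep (\<lambda>b d. if b < length ks then (if d = 0 then 1 else 0) else a (b - length ks) d))"
    "k < dim_col (toep (\<lambda>b d. if b < length ks then (if d = 0 then 1 else 0) else a (b - length ks) d))"
  then have i: "i < N" and k: "k < N" by simp_all
  show "A_mat a ks js $$ (i, k) = toep (\<lambda>b d. if b < length ks then (if d = 0 then 1 else 0) else a (b - length ks) d) $$ (i, k)"
  proof (cases "bk i = bk k \<and> ps k \<le> ps i \<and> bk i < length ks")
    case True
    then have "ps i = 0" "ps k = 0" using pos_lt[OF i] pos_lt[OF k] bsize_ks[of "bk i"] by auto
    then have "i = k" using same_idx[OF i k] True by auto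
    then show ?thesis using True i k \<open>ps i = 0\<close> by (simp add: A_mat_def toep_entry)
  next
    case False
    then show ?thesis using i k by (auto simp: A_mat_def toep_entry)
  qed
qed (simp_all add: A_mat_def)

lemma F_toep: "F_mat p q rho0 ks js n m = toep (\<lambda>b d. drho p q rho0 n m d (ev b))"
  by (simp add: F_mat_def toep_def)

lemma H_hank: "H_mat c ks js = hank (\<lambda>b d. c $ (bstart ks js b + d))"
proof (rule eq_matI)
  fix i k assume "i < dim_row (hank (\<lambda>b d. c $ (bstart ks js b + d)))" "k < dim_col (hank (\<lambda>b d. c $ (bstart ks js b + d)))"
  then have i: "i < N" and k: "k < N" by simp_all
  have "i - ps i = bstart ks js (bk i)" using idx_eq[OF i] by linarith
  then show "H_mat c ks js $$ (i, k) = hank (\<lambda>b d. c $ (bstart ks js b + d)) $$ (i, k)"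
    using i k by (cases "bk i = bk k") (simp_all add: H_mat_def hank_entry)
qed (simp_all add: H_mat_def)

lemma r_toep: "r_vec p q rho0 ks js n m = F_mat p q rho0 ks js n m *\<^sub>v evec"
  unfolding F_toep toep_evec by (simp add: r_vec_def)

lemma c_hank: assumes "dim_vec c = N"
  shows "c = H_mat c ks js *\<^sub>v evec"
proof -
  have "vec N (\<lambda>i. c $ (bstart ks js (bk i) + ps i)) = c"
    using assms idx_eq by (auto intro!: eq_vecI)
  then show ?thesis unfolding H_hank hank_evec by simp
qed

lemma concrete_cauchy_setting:
  assumes eig_sum: "\<forall>la mu. eigenvalue Gm la \<longrightarrow> eigenvalue Gm mu \<longrightarrow> la + mu \<noteq> 0"
  shows "cauchy_setting N Gm (G_mat ks js) (H_mat c ks js) evec"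
proof
  show "H_mat c ks js \<in> carrier_mat N N" unfolding H_hank by simp
  show "H_mat c ks js * Gm = Gm\<^sup>T * H_mat c ks js" unfolding H_hank by (rule hank_Gamma)
  show "(H_mat c ks js)\<^sup>T = H_mat c ks js" unfolding H_hank by (rule hank_sym)
  show "Gm * G_mat ks js + G_mat ks js * Gm\<^sup>T = mat N N (\<lambda>(i, k). evec $ i * evec $ k)"
    by (rule G_sylvester) (use eig_sum eig_eigenvalue in blast)
qed (simp_all add: G_sym)

definition L_mat :: "complex \<Rightarrow> complex \<Rightarrow> complex \<Rightarrow> (nat \<Rightarrow> nat \<Rightarrow> complex) \<Rightarrow> int \<Rightarrow> int \<Rightarrow> complex mat" where
  "L_mat p q rho0 a n m = A_mat a ks js * F_mat p q rho0 ks js n m"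

lemma L_mat_carrier: "L_mat p q rho0 a n m \<in> carrier_mat N N"
  unfolding L_mat_def A_toep F_toep by (rule mult_carrier_mat[of _ N N _ N]) simp_all

lemma L_mat_comm: "Gm * L_mat p q rho0 a n m = L_mat p q rho0 a n m * Gm"
proof -
  let ?A = "A_mat a ks js" and ?F = "F_mat p q rho0 ks js n m"
  have c: "?A \<in> carrier_mat N N" "?F \<in> carrier_mat N N" unfolding A_toep F_toep by simp_all
  have "Gm * (?A * ?F) = (Gm * ?A) * ?F" using c by (simp add: assoc_mult_mat[of _ N N _ N _ N])
  also have "\<dots> = ?A * (Gm * ?F)" using c by (simp add: A_toep toep_comm assoc_mult_mat[of _ N N _ N _ N])
  also have "\<dots> = (?A * ?F) * Gm" using c by (simp add: F_toep toep_comm assoc_mult_mat[of _ N N _ N _ N])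
  finally show ?thesis unfolding L_mat_def .
qed

lemma L_mat_HL_sym: "(H_mat c ks js * L_mat p q rho0 a n m)\<^sup>T = H_mat c ks js * L_mat p q rho0 a n m"
  unfolding L_mat_def H_hank A_toep F_toep
  by (simp add: assoc_mult_mat[of _ N N _ N _ N, symmetric] hank_toep hank_sym)

lemma L_mat_shifts:
  assumes pq: "\<forall>la. eigenvalue Gm la \<longrightarrow> p \<noteq> la \<and> p \<noteq> - la \<and> q \<noteq> la \<and> q \<noteq> - la"
  shows "p \<cdot>\<^sub>m L_mat p q rho0 a (n + 1) m - Gm * L_mat p q rho0 a (n + 1) m
           = p \<cdot>\<^sub>m L_mat p q rho0 a n m + Gm * L_mat p q rho0 a n m"
    and "q \<cdot>\<^sub>m L_mat p q rho0 a n (m + 1) - Gm * L_mat p q rho0 a n (m + 1)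
           = q \<cdot>\<^sub>m L_mat p q rho0 a n m + Gm * L_mat p q rho0 a n m"
proof -
  have ne: "ev (bk i) \<noteq> p \<and> ev (bk i) \<noteq> - p \<and> ev (bk i) \<noteq> q \<and> ev (bk i) \<noteq> - q" if "i < N" for i
    using pq eig_eigenvalue[OF that] by auto
  have A: "A_mat a ks js \<in> carrier_mat N N" "Gm * A_mat a ks js = A_mat a ks js * Gm"
    unfolding A_toep by (simp_all add: toep_comm)
  have F: "F_mat p q rho0 ks js n' m' \<in> carrier_mat N N" for n' m'
    unfolding F_toep by simp
  have "p \<cdot>\<^sub>m F_mat p q rho0 ks js (n + 1) m - Gm * F_mat p q rho0 ks js (n + 1) m
      = p \<cdot>\<^sub>m F_mat p q rho0 ks js n m + Gm * F_mat p q rho0 ks js n m"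
    unfolding F_toep by (rule toep_shift, rule drho_shift_n) (use ne in auto)
  then show "p \<cdot>\<^sub>m L_mat p q rho0 a (n + 1) m - Gm * L_mat p q rho0 a (n + 1) m
      = p \<cdot>\<^sub>m L_mat p q rho0 a n m + Gm * L_mat p q rho0 a n m"
    unfolding L_mat_def by (rule shift_left_mult[OF A(1) F F Gamma_carrier A(2)])
  have "q \<cdot>\<^sub>m F_mat p q rho0 ks js n (m + 1) - Gm * F_mat p q rho0 ks js n (m + 1)
      = q \<cdot>\<^sub>m F_mat p q rho0 ks js n m + Gm * F_mat p q rho0 ks js n m"
    unfolding F_toep by (rule toep_shift, rule drho_shift_m) (use ne in auto)
  then show "q \<cdot>\<^sub>m L_mat p q rho0 a n (m + 1) - Gm * L_mat p q rho0 a n (m + 1)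
      = q \<cdot>\<^sub>m L_mat p q rho0 a n m + Gm * L_mat p q rho0 a n m"
    unfolding L_mat_def by (rule shift_left_mult[OF A(1) F F Gamma_carrier A(2)])
qed

lemma w_fun_eq:
  assumes "dim_vec c = N"
  shows "w_fun p q rho0 a c ks js n m = (H_mat c ks js *\<^sub>v evec) \<bullet>
    (mat_inv (1\<^sub>m N + L_mat p q rho0 a n m * G_mat ks js * H_mat c ks js) *\<^sub>v (L_mat p q rho0 a n m *\<^sub>v evec))"
proof -
  have "A_mat a ks js *\<^sub>v r_vec p q rho0 ks js n m = L_mat p q rho0 a n m *\<^sub>v evec"
    unfolding r_toep L_mat_def
    by (rule assoc_mult_mat_vec[symmetric, of _ N N _ N]) (simp_all add: A_toep F_toep)
  then show ?thesis
    unfolding w_fun_def M_mat_def c_hank[OF assms, symmetric] by (simp add: L_mat_def)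
qed

end

theorem mainTheorem8:
  fixes p q rho0 :: complex
    and ks :: "complex list"              \<comment> \<open>k_1, ..., k_N1\<close>
    and js :: "(complex \<times> nat) list"     \<comment> \<open>(kappa_j, N_j), j = 2..s\<close>
    and a :: "nat \<Rightarrow> nat \<Rightarrow> complex"    \<comment> \<open>first columns of the Toeplitz blocks A_j\<close>
    and c :: "complex vec"
  assumes sizes: "\<forall>b \<in> set js. snd b \<ge> 1"
    and c_dim: "dim_vec c = dimN ks js"
    and eig_sum: "\<forall>la mu. eigenvalue (Gamma_mat ks js) la \<longrightarrow> eigenvalue (Gamma_mat ks js) mu \<longrightarrow> la + mu \<noteq> 0"
    and pq: "\<forall>la. eigenvalue (Gamma_mat ks js) la \<longrightarrow> p \<noteq> la \<and> p \<noteq> - la \<and> q \<noteq> la \<and> q \<noteq> - la"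
    and inv: "\<forall>n m :: int. invertible_mat (1\<^sub>m (dimN ks js) + M_mat p q rho0 a c ks js n m)"
  shows "\<forall>n m :: int.
    (p + q + w_fun p q rho0 a c ks js n m - w_fun p q rho0 a c ks js (n + 1) (m + 1)) *
    (p - q + w_fun p q rho0 a c ks js n (m + 1) - w_fun p q rho0 a c ks js (n + 1) m) = p\<^sup>2 - q\<^sup>2"
proof -
  let ?L = "L_mat ks js p q rho0 a"
  interpret cs: cauchy_setting "dimN ks js" "Gamma_mat ks js" "G_mat ks js" "H_mat c ks js" "evec ks js"
    by (rule concrete_cauchy_setting[OF eig_sum])
  have inv_L: "invertible_mat (cs.sys (?L n' m'))" for n' m'
    using inv by (simp add: cs.sys_def L_mat_def M_mat_def)
  have w: "w_fun p q rho0 a c ks js n' m' = cs.pot (?L n' m')" for n' m'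
    unfolding w_fun_eq[OF c_dim] cs.pot_def cs.sol_def cs.sys_inv_def cs.sys_def cs.cvec_def ..
  show ?thesis
    unfolding w by (intro allI cs.lpkdv_abstract[of ?L, OF L_mat_carrier inv_L L_mat_comm L_mat_HL_sym
      L_mat_shifts[OF pq]])
qed

end
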